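(* Let $R$ be an $n\times n$ nonnegative matrix with entrywise positive left and right eigenvectors $u$ and $v$ for the PF eigenvalue $1$, normalized so that $\langle u,v\rangle=1$, and let $\kappa=\min_iu_iv_i$. Then for every $0<\epsilon<1$ the mixing time of the continuous-time operator satisfies \[ \frac{\frac12-\epsilon}{\phi(R)}\le\tau_\epsilon(\exp(R-I))\le\frac{100\cdot\ln\!\left(\frac{n}{\kappa\cdot\epsilon}\right)}{\phi^2(R)}. \]
   Context: $\exp(M)=\sum_{i\ge0}M^i/i!$. The continuous mixing time $\tau_\epsilon(\exp(R-I))$ is the infimum of real $t\ge0$ such that $\|D_u(\exp(t(R-I))-vu^T)x\|_1\le\epsilon$ for every real $x$ with $\|D_ux\|_1=1$, where $D_u$ is the diagonal matrix with $u$ on the diagonal. $\phi(R)=\min\phi_S(R)$ over nonempty $S\subseteq[n]$ with $\sum_{i\in S}u_iv_i\le\frac12$, where $\phi_S(R)=\langle\mathbf 1_S,D_uRD_v\mathbf 1_{\overline S}\rangle/\langle\mathbf 1_S,D_uRD_v\mathbf 1\rangle$ and $\mathbf 1_S$ is the indicator vector of $S$ (bounds with $\phi(R)=0$ are read as $+\infty$). *)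

theory Defs
  imports "HOL-Analysis.Analysis"
begin

text \<open>n x n real matrices are represented as functions nat => nat => real,
  only the entries with indices below n being relevant; vectors as nat => real.\<close>

definition id_mat :: "nat \<Rightarrow> nat \<Rightarrow> real" where
  "id_mat i j = (if i = j then 1 else 0)"

definition mat_mult :: "nat \<Rightarrow> (nat \<Rightarrow> nat \<Rightarrow> real) \<Rightarrow> (nat \<Rightarrow> nat \<Rightarrow> real) \<Rightarrow> nat \<Rightarrow> nat \<Rightarrow> real" where
  "mat_mult n A B i j = (\<Sum>k<n. A i k * B k j)"

fun mat_pow :: "nat \<Rightarrow> (nat \<Rightarrow> nat \<Rightarrow> real) \<Rightarrow> nat \<Rightarrow> nat \<Rightarrow> nat \<Rightarrow> real" where
  "mat_pow n A 0 = id_mat"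
| "mat_pow n A (Suc k) = mat_mult n (mat_pow n A k) A"

definition mat_exp :: "nat \<Rightarrow> (nat \<Rightarrow> nat \<Rightarrow> real) \<Rightarrow> nat \<Rightarrow> nat \<Rightarrow> real" where
  "mat_exp n M i j = (\<Sum>k. mat_pow n M k i j / fact k)"

text \<open>Continuous mixing time tau_eps(exp(R - I)); infimum over the empty set is +infinity.\<close>
definition mixing_time_cont ::
  "nat \<Rightarrow> (nat \<Rightarrow> nat \<Rightarrow> real) \<Rightarrow> (nat \<Rightarrow> real) \<Rightarrow> (nat \<Rightarrow> real) \<Rightarrow> real \<Rightarrow> ereal" where
  "mixing_time_cont n R u v \<epsilon> = Inf (ereal ` {t. t \<ge> 0 \<and>
     (\<forall>x :: nat \<Rightarrow> real. (\<Sum>i<n. \<bar>u i * x i\<bar>) = 1 \<longrightarrow>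
        (\<Sum>i<n. \<bar>u i * (\<Sum>j<n. (mat_exp n (\<lambda>a b. t * (R a b - id_mat a b)) i j - v i * u j) * x j)\<bar>) \<le> \<epsilon>)})"

definition edge_expansion_set ::
  "nat \<Rightarrow> (nat \<Rightarrow> nat \<Rightarrow> real) \<Rightarrow> (nat \<Rightarrow> real) \<Rightarrow> (nat \<Rightarrow> real) \<Rightarrow> nat set \<Rightarrow> real" where
  "edge_expansion_set n R u v S =
     (\<Sum>i\<in>S. \<Sum>j\<in>{..<n} - S. u i * R i j * v j) / (\<Sum>i\<in>S. \<Sum>j<n. u i * R i j * v j)"

text \<open>phi(R); as an extended real, with the (only for n = 1 occurring) empty minimum read as +infinity.\<close>
definition edge_expansion ::
  "nat \<Rightarrow> (nat \<Rightarrow> nat \<Rightarrow> real) \<Rightarrow> (nat \<Rightarrow> real) \<Rightarrow> (nat \<Rightarrow> real) \<Rightarrow> ereal" where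
  "edge_expansion n R u v = Inf {ereal (edge_expansion_set n R u v S) | S.
      S \<noteq> {} \<and> S \<subseteq> {..<n} \<and> (\<Sum>i\<in>S. u i * v i) \<le> 1/2}"

end

(* Conjugating R by diag v gives a Markov operator P with stationary distribution \<pi> = u v,
   and exp (t (R - I)) (v h) = v exp (t (P - I)) h; so the mixing error of x is the \<pi>-weighted
   L1 distance of the continuous-time walk started from h = x / v to its mean.

   Upper bound: the discrete co-area inequality turns the edge expansion \<phi> into Cheeger's
   inequality energy g \<ge> \<phi>^2/8 |g|^2 for mean-zero g (splitting g at a median), so the lazy
   walk T = (I + P)/2 contracts the variance by 1 - \<phi>^2/16.  As t (R - I) = 2 t (L - I) for
   the lazy matrix L = (I + R)/2, the error decays like exp (- t \<phi>^2/16) / sqrt \<kappa>.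

   Lower bound: started from \<pi> conditioned on a set S with \<pi> S \<le> 1/2, each step of the walk
   moves at most \<phi> S of mass out of S, so by time t at most t \<phi> S has left and the error is
   at least 1 - 2 t \<phi> S. *)

theory Submission
  imports Defs
begin

section \<open>Exponentials of matrices\<close>

lemma exp_real_sums: "(\<lambda>m. s^m / fact m) sums exp (s::real)"
  using exp_converges[of s] by (simp add: divide_inverse mult.commute)

lemma sums_exp_times_index: "(\<lambda>m. s^m / fact m * real m) sums (s * exp (s::real))"
proof -
  have "(\<lambda>m. s^(Suc m) / fact (Suc m) * real (Suc m)) = (\<lambda>m. s * (s^m / fact m))"
    by (intro ext) (simp add: divide_simps)
  then have "(\<lambda>m. s^(Suc m) / fact (Suc m) * real (Suc m)) sums (s * exp s)"
    using sums_mult[OF exp_real_sums] by simp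
  then show ?thesis by (subst (asm) sums_Suc_iff) simp
qed

lemma sum_binomial_Suc:
  fixes c :: real
  shows "(\<Sum>m\<le>Suc k. of_nat (Suc k choose m) * c^(Suc k - m) * a m) =
    (\<Sum>m\<le>k. of_nat (k choose m) * c^(k - m) * a (Suc m)) +
    c * (\<Sum>m\<le>k. of_nat (k choose m) * c^(k - m) * a m)"
proof -
  have "(\<Sum>m\<le>Suc k. of_nat (Suc k choose m) * c^(Suc k - m) * a m) =
      (c^(Suc k) * a 0 + (\<Sum>m\<le>k. of_nat (k choose Suc m) * c^(k - m) * a (Suc m)))
      + (\<Sum>m\<le>k. of_nat (k choose m) * c^(k - m) * a (Suc m))"
    by (subst sum.atMost_Suc_shift) (simp add: sum.distrib algebra_simps)
  also have "c^(Suc k) * a 0 + (\<Sum>m\<le>k. of_nat (k choose Suc m) * c^(k - m) * a (Suc m)) =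
      (\<Sum>m\<le>Suc k. of_nat (k choose m) * c^(Suc k - m) * a m)"
    unfolding sum.atMost_Suc_shift by simp
  also have "\<dots> = (\<Sum>m\<le>k. of_nat (k choose m) * c^(Suc k - m) * a m)"
    by (simp add: binomial_eq_0)
  also have "\<dots> = c * (\<Sum>m\<le>k. of_nat (k choose m) * c^(k - m) * a m)"
    unfolding sum_distrib_left by (intro sum.cong) (auto simp: Suc_diff_le)
  finally show ?thesis by (simp add: add.commute)
qed

lemma mat_pow_scale: "mat_pow n (\<lambda>a b. s * B a b) k i j = s^k * mat_pow n B k i j"
  by (induction k arbitrary: j) (simp_all add: mat_mult_def sum_distrib_left algebra_simps)

lemma mat_mult_id_right: "j < n \<Longrightarrow> mat_mult n A id_mat i j = A i j"
  by (simp add: mat_mult_def id_mat_def if_distrib cong: if_cong)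

lemma mat_pow_add_id:
  assumes "j < n"
  shows "mat_pow n (\<lambda>a b. Y a b + c * id_mat a b) k i j =
    (\<Sum>m\<le>k. of_nat (k choose m) * c^(k - m) * mat_pow n Y m i j)"
  using assms
proof (induction k arbitrary: j)
  case (Suc k)
  let ?Z = "mat_pow n (\<lambda>a b. Y a b + c * id_mat a b) k"
  have "mat_pow n (\<lambda>a b. Y a b + c * id_mat a b) (Suc k) i j =
      (\<Sum>l<n. ?Z i l * Y l j) + c * mat_mult n ?Z id_mat i j"
    by (simp add: mat_mult_def distrib_left sum.distrib sum_distrib_left algebra_simps)
  also have "(\<Sum>l<n. ?Z i l * Y l j) =
      (\<Sum>m\<le>k. of_nat (k choose m) * c^(k - m) * mat_pow n Y (Suc m) i j)"
    using Suc.IH by (simp add: mat_mult_def sum_distrib_left sum_distrib_right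
        sum.swap[of _ "{..<n}"] mult.assoc)
  finally show ?case
    using Suc sum_binomial_Suc[of k c "\<lambda>m. mat_pow n Y m i j"] by (simp add: mat_mult_id_right)
qed simp

lemma abs_mat_pow_le:
  assumes "j < n"
  shows "\<bar>mat_pow n B k i j\<bar> \<le> (\<Sum>a<n. \<Sum>b<n. \<bar>B a b\<bar>) ^ k"
  using assms
proof (induction k arbitrary: j)
  case 0
  then show ?case by (simp add: id_mat_def)
next
  case (Suc k)
  let ?C = "\<Sum>a<n. \<Sum>b<n. \<bar>B a b\<bar>"
  have col: "(\<Sum>l<n. \<bar>B l j\<bar>) \<le> ?C"
    using Suc.prems by (intro sum_mono member_le_sum) auto
  have "\<bar>mat_pow n B (Suc k) i j\<bar> \<le> (\<Sum>l<n. \<bar>mat_pow n B k i l\<bar> * \<bar>B l j\<bar>)"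
    by (simp add: mat_mult_def abs_mult[symmetric] sum_abs)
  also have "\<dots> \<le> (\<Sum>l<n. ?C^k * \<bar>B l j\<bar>)"
    by (intro sum_mono mult_right_mono) (auto intro: Suc.IH)
  also have "\<dots> = ?C^k * (\<Sum>l<n. \<bar>B l j\<bar>)"
    by (simp add: sum_distrib_left)
  also have "\<dots> \<le> ?C^k * ?C"
    using col by (intro mult_left_mono) (simp_all add: sum_nonneg)
  finally show ?case by (simp add: mult.commute)
qed

lemma summable_abs_exp_mat_pow:
  assumes "j < n"
  shows "summable (\<lambda>m. \<bar>s^m / fact m * mat_pow n B m i j\<bar>)"
proof (rule summable_comparison_test'[OF sums_summable[OF exp_real_sums], where N = 0])
  fix m :: nat
  let ?C = "\<Sum>a<n. \<Sum>b<n. \<bar>B a b\<bar>"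
  have "\<bar>s\<bar>^m * \<bar>mat_pow n B m i j\<bar> \<le> \<bar>s\<bar>^m * ?C^m"
    using abs_mat_pow_le[OF assms] by (intro mult_left_mono) auto
  then show "norm \<bar>s^m / fact m * mat_pow n B m i j\<bar> \<le> (\<bar>s\<bar> * ?C)^m / fact m"
    by (simp add: abs_mult power_abs power_mult_distrib divide_right_mono)
qed

text \<open>Since \<open>s B\<close> and \<open>- s I\<close> commute, \<open>exp (s (B - I)) = exp (- s) exp (s B)\<close>; the Cauchy product
  of the two exponential series makes this precise entrywise.\<close>

lemma mat_exp_minus_id:
  assumes "j < n"
  shows "mat_exp n (\<lambda>a b. s * (B a b - id_mat a b)) i j =
    exp (- s) * (\<Sum>m. s^m / fact m * mat_pow n B m i j)"
proof -
  have eq: "(\<lambda>a b. s * (B a b - id_mat a b)) = (\<lambda>a b. s * B a b + (- s) * id_mat a b)"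
    by (auto simp: algebra_simps)
  have "mat_exp n (\<lambda>a b. s * (B a b - id_mat a b)) i j =
      (\<Sum>k. \<Sum>m\<le>k. (s^m / fact m * mat_pow n B m i j) * ((- s)^(k - m) / fact (k - m)))"
    unfolding mat_exp_def eq mat_pow_add_id[OF assms] mat_pow_scale
    by (intro suminf_cong) (auto simp: sum_divide_distrib binomial_fact intro!: sum.cong)
  also have "\<dots> = (\<Sum>m. s^m / fact m * mat_pow n B m i j) * (\<Sum>k. (- s)^k / fact k)"
  proof (rule Cauchy_product[symmetric])
    show "summable (\<lambda>k. norm (s^k / fact k * mat_pow n B k i j))"
      using summable_abs_exp_mat_pow[OF assms] by simp
    show "summable (\<lambda>k. norm ((- s)^k / fact k))"
      using sums_summable[OF exp_real_sums[of "\<bar>s\<bar>"]] by (simp add: power_abs)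
  qed
  also have "(\<Sum>k. (- s)^k / fact k) = exp (- s)"
    using exp_real_sums by (rule sums_unique[symmetric])
  finally show ?thesis by simp
qed

definition mat_vec :: "nat \<Rightarrow> (nat \<Rightarrow> nat \<Rightarrow> real) \<Rightarrow> (nat \<Rightarrow> real) \<Rightarrow> nat \<Rightarrow> real" where
  "mat_vec n A x i = (\<Sum>j<n. A i j * x j)"

lemma mat_vec_cong: "(\<And>j. j < n \<Longrightarrow> x j = y j) \<Longrightarrow> mat_vec n B x i = mat_vec n B y i"
  by (simp add: mat_vec_def)

lemma mat_vec_mat_pow: "i < n \<Longrightarrow> mat_vec n (mat_pow n B k) x i = (mat_vec n B ^^ k) x i"
proof (induction k arbitrary: x i)
  case 0
  have "(\<Sum>j<n. id_mat i j * x j) = (\<Sum>j<n. if i = j then x j else 0)"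
    by (intro sum.cong) (auto simp: id_mat_def)
  with 0 show ?case by (simp add: mat_vec_def)
next
  case (Suc k)
  have "mat_vec n (mat_pow n B (Suc k)) x i = (\<Sum>j<n. \<Sum>l<n. mat_pow n B k i l * B l j * x j)"
    by (simp add: mat_vec_def mat_mult_def sum_distrib_right)
  also have "\<dots> = mat_vec n (mat_pow n B k) (mat_vec n B x) i"
    by (subst sum.swap) (simp add: mat_vec_def sum_distrib_left mult.assoc)
  finally have "mat_vec n (mat_pow n B (Suc k)) x i = mat_vec n (mat_pow n B k) (mat_vec n B x) i" .
  with Suc show ?case by (simp add: funpow_Suc_right del: funpow.simps)
qed

lemma summable_abs_exp_mat_pow_mult:
  assumes "j < n"
  shows "summable (\<lambda>m. \<bar>s^m / fact m * mat_pow n B m i j * x j\<bar>)"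
proof -
  have "summable (\<lambda>m. \<bar>s^m / fact m * mat_pow n B m i j\<bar> * \<bar>x j\<bar>)"
    by (rule summable_mult2) (rule summable_abs_exp_mat_pow[OF assms])
  then show ?thesis by (simp add: abs_mult)
qed

lemma mult_mat_vec: "c * mat_vec n A x i = (\<Sum>j<n. c * A i j * x j)"
  by (simp add: mat_vec_def sum_distrib_left mult.assoc)

lemma summable_abs_exp_mat_vec: "summable (\<lambda>m. \<bar>s^m / fact m * mat_vec n (mat_pow n B m) x i\<bar>)"
proof -
  have "summable (\<lambda>m. \<Sum>j<n. \<bar>s^m / fact m * mat_pow n B m i j * x j\<bar>)"
    by (intro summable_sum summable_abs_exp_mat_pow_mult) simp
  then show ?thesis
    unfolding mult_mat_vec
    by (rule summable_comparison_test'[where N = 0]) (simp only: real_norm_def abs_abs sum_abs)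
qed

lemma mat_exp_minus_id_apply:
  "(\<Sum>j<n. mat_exp n (\<lambda>a b. s * (B a b - id_mat a b)) i j * x j) =
    exp (- s) * (\<Sum>m. s^m / fact m * mat_vec n (mat_pow n B m) x i)"
proof -
  have "mat_exp n (\<lambda>a b. s * (B a b - id_mat a b)) i j * x j =
      exp (- s) * (\<Sum>m. s^m / fact m * mat_pow n B m i j * x j)" if "j < n" for j
  proof -
    have "summable (\<lambda>m. s^m / fact m * mat_pow n B m i j)"
      using summable_abs_exp_mat_pow[OF that] by (rule summable_rabs_cancel)
    then have "(\<Sum>m. s^m / fact m * mat_pow n B m i j) * x j =
        (\<Sum>m. s^m / fact m * mat_pow n B m i j * x j)"
      by (rule suminf_mult2)
    then show ?thesis
      unfolding mat_exp_minus_id[OF that] by (simp only: mult.assoc)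
  qed
  then have "(\<Sum>j<n. mat_exp n (\<lambda>a b. s * (B a b - id_mat a b)) i j * x j) =
      exp (- s) * (\<Sum>j<n. \<Sum>m. s^m / fact m * mat_pow n B m i j * x j)"
    unfolding sum_distrib_left by (intro sum.cong) simp_all
  also have "(\<Sum>j<n. \<Sum>m. s^m / fact m * mat_pow n B m i j * x j) =
      (\<Sum>m. \<Sum>j<n. s^m / fact m * mat_pow n B m i j * x j)"
    by (rule suminf_sum[symmetric], rule summable_rabs_cancel, rule summable_abs_exp_mat_pow_mult)
      simp
  finally show ?thesis
    unfolding mult_mat_vec .
qed

lemma funpow_mat_vec_intertwined:
  assumes rel: "\<And>h i. i < n \<Longrightarrow> mat_vec n B (\<lambda>j. v j * h j) i = v i * F h i"
    and cong: "\<And>f g i. (\<And>j. j < n \<Longrightarrow> f j = g j) \<Longrightarrow> i < n \<Longrightarrow> F f i = F g i"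
    and "i < n"
  shows "(mat_vec n B ^^ k) (\<lambda>j. v j * h j) i = v i * (F^^k) h i"
  using \<open>i < n\<close>
proof (induction k arbitrary: i)
  case (Suc k)
  have "(mat_vec n B ^^ Suc k) (\<lambda>j. v j * h j) i =
      mat_vec n B ((mat_vec n B ^^ k) (\<lambda>j. v j * h j)) i"
    by simp
  also have "\<dots> = mat_vec n B (\<lambda>j. v j * (F^^k) h j) i"
    by (rule mat_vec_cong) (rule Suc.IH)
  also have "\<dots> = v i * (F^^Suc k) h i"
    using rel[OF Suc.prems] by simp
  finally show ?case .
qed simp

section \<open>Poisson averages of an operator\<close>

text \<open>The operator \<open>exp (s (F - I))\<close>: apply \<open>F\<close> a Poisson(\<open>s\<close>)-distributed number of times.\<close>

definition poisson :: "((nat \<Rightarrow> real) \<Rightarrow> nat \<Rightarrow> real) \<Rightarrow> real \<Rightarrow> (nat \<Rightarrow> real) \<Rightarrow> nat \<Rightarrow> real" where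
  "poisson F s h i = exp (- s) * (\<Sum>m. s^m / fact m * (F^^m) h i)"

lemma mat_exp_minus_id_apply_intertwined:
  assumes rel: "\<And>h i. i < n \<Longrightarrow> mat_vec n B (\<lambda>j. v j * h j) i = v i * F h i"
    and cong: "\<And>f g i. (\<And>j. j < n \<Longrightarrow> f j = g j) \<Longrightarrow> i < n \<Longrightarrow> F f i = F g i"
    and i: "i < n" and vi: "v i \<noteq> 0"
  shows "(\<Sum>j<n. mat_exp n (\<lambda>a b. s * (B a b - id_mat a b)) i j * (v j * h j)) =
      v i * poisson F s h i"
    and "summable (\<lambda>m. \<bar>s^m / fact m * (F^^m) h i\<bar>)"
proof -
  have iter: "mat_vec n (mat_pow n B m) (\<lambda>j. v j * h j) i = v i * (F^^m) h i" for m
    using mat_vec_mat_pow[OF i] funpow_mat_vec_intertwined[OF rel cong i] by simp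
  have "summable (\<lambda>m. \<bar>v i\<bar> * \<bar>s^m / fact m * (F^^m) h i\<bar>)"
    using summable_abs_exp_mat_vec[of s n B "\<lambda>j. v j * h j" i]
    unfolding iter by (simp add: abs_mult algebra_simps)
  from summable_mult[OF this, of "1 / \<bar>v i\<bar>"]
  show sF: "summable (\<lambda>m. \<bar>s^m / fact m * (F^^m) h i\<bar>)"
    using vi by simp
  have "(\<Sum>m. s^m / fact m * (v i * (F^^m) h i)) = v i * (\<Sum>m. s^m / fact m * (F^^m) h i)"
    using suminf_mult[OF summable_rabs_cancel[OF sF], of "v i"] by (simp add: algebra_simps)
  then show "(\<Sum>j<n. mat_exp n (\<lambda>a b. s * (B a b - id_mat a b)) i j * (v j * h j)) =
      v i * poisson F s h i"
    by (simp add: mat_exp_minus_id_apply iter poisson_def)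
qed

lemma sum_poisson:
  assumes "finite A" and summ: "\<And>i. i \<in> A \<Longrightarrow> summable (\<lambda>m. \<bar>s^m / fact m * (F^^m) h i\<bar>)"
  shows "(\<Sum>i\<in>A. w i * poisson F s h i) = exp (- s) * (\<Sum>m. s^m / fact m * (\<Sum>i\<in>A. w i * (F^^m) h i))"
    and "summable (\<lambda>m. s^m / fact m * (\<Sum>i\<in>A. w i * (F^^m) h i))"
proof -
  have "summable (\<lambda>m. w i * (s^m / fact m * (F^^m) h i))" if "i \<in> A" for i
    using summable_mult[OF summable_rabs_cancel[OF summ[OF that]]] .
  then have "summable (\<lambda>m. \<Sum>i\<in>A. w i * (s^m / fact m * (F^^m) h i))"
    by (rule summable_sum)
  then show "summable (\<lambda>m. s^m / fact m * (\<Sum>i\<in>A. w i * (F^^m) h i))"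
    by (simp add: sum_distrib_left algebra_simps)
  have "(\<Sum>i\<in>A. w i * poisson F s h i) = exp (- s) * (\<Sum>i\<in>A. \<Sum>m. w i * (s^m / fact m * (F^^m) h i))"
  proof -
    have "w i * poisson F s h i = exp (- s) * (\<Sum>m. w i * (s^m / fact m * (F^^m) h i))"
      if "i \<in> A" for i
      using suminf_mult[OF summable_rabs_cancel[OF summ[OF that]], of "w i"]
      by (simp add: poisson_def)
    then show ?thesis
      by (simp add: sum_distrib_left)
  qed
  also have "(\<Sum>i\<in>A. \<Sum>m. w i * (s^m / fact m * (F^^m) h i)) =
      (\<Sum>m. \<Sum>i\<in>A. w i * (s^m / fact m * (F^^m) h i))"
    by (rule suminf_sum[symmetric], rule summable_mult, rule summable_rabs_cancel, rule summ)
  finally show "(\<Sum>i\<in>A. w i * poisson F s h i) =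
      exp (- s) * (\<Sum>m. s^m / fact m * (\<Sum>i\<in>A. w i * (F^^m) h i))"
    by (simp add: sum_distrib_left algebra_simps)
qed

lemma sum_poisson_le:
  assumes "finite A" and summ: "\<And>i. i \<in> A \<Longrightarrow> summable (\<lambda>m. \<bar>s^m / fact m * (F^^m) h i\<bar>)"
    and "0 \<le> s" and le: "\<And>m. (\<Sum>i\<in>A. w i * (F^^m) h i) \<le> b m"
    and "summable (\<lambda>m. s^m / fact m * b m)"
  shows "(\<Sum>i\<in>A. w i * poisson F s h i) \<le> exp (- s) * (\<Sum>m. s^m / fact m * b m)"
proof -
  have summ_sum: "summable (\<lambda>m. s^m / fact m * (\<Sum>i\<in>A. w i * (F^^m) h i))"
    by (rule sum_poisson(2)[OF assms(1,2)])
  have "(\<Sum>m. s^m / fact m * (\<Sum>i\<in>A. w i * (F^^m) h i)) \<le> (\<Sum>m. s^m / fact m * b m)"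
  proof (rule suminf_le[OF _ summ_sum assms(5)])
    show "s^m / fact m * (\<Sum>i\<in>A. w i * (F^^m) h i) \<le> s^m / fact m * b m" for m
      using le[of m] \<open>0 \<le> s\<close> by (intro mult_left_mono) simp_all
  qed
  then have "exp (- s) * (\<Sum>m. s^m / fact m * (\<Sum>i\<in>A. w i * (F^^m) h i)) \<le>
      exp (- s) * (\<Sum>m. s^m / fact m * b m)"
    by (rule mult_left_mono) simp
  then show ?thesis
    by (simp only: sum_poisson(1)[OF assms(1,2)])
qed

lemma sum_abs_poisson_le:
  assumes "finite A" and summ: "\<And>i. i \<in> A \<Longrightarrow> summable (\<lambda>m. \<bar>s^m / fact m * (F^^m) h i\<bar>)"
    and w: "\<And>i. i \<in> A \<Longrightarrow> 0 \<le> w i" and "0 \<le> s" "0 \<le> q"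
    and le: "\<And>m. (\<Sum>i\<in>A. w i * \<bar>(F^^m) h i\<bar>) \<le> C * q^m"
  shows "(\<Sum>i\<in>A. w i * \<bar>poisson F s h i\<bar>) \<le> exp (- (s * (1 - q))) * C"
proof -
  have "\<bar>poisson F s h i\<bar> \<le> exp (- s) * (\<Sum>m. \<bar>s^m / fact m * (F^^m) h i\<bar>)" if "i \<in> A" for i
    using summable_rabs[OF summ[OF that]] by (simp add: poisson_def abs_mult)
  then have "(\<Sum>i\<in>A. w i * \<bar>poisson F s h i\<bar>) \<le>
      (\<Sum>i\<in>A. w i * (exp (- s) * (\<Sum>m. \<bar>s^m / fact m * (F^^m) h i\<bar>)))"
    using w by (intro sum_mono mult_left_mono) simp_all
  also have "\<dots> = exp (- s) * (\<Sum>i\<in>A. \<Sum>m. w i * \<bar>s^m / fact m * (F^^m) h i\<bar>)"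
  proof -
    have "w i * (exp (- s) * (\<Sum>m. \<bar>s^m / fact m * (F^^m) h i\<bar>)) =
        exp (- s) * (\<Sum>m. w i * \<bar>s^m / fact m * (F^^m) h i\<bar>)" if "i \<in> A" for i
      using suminf_mult[OF summ[OF that], of "w i"] by simp
    then show ?thesis
      unfolding sum_distrib_left by (intro sum.cong refl) blast
  qed
  also have "(\<Sum>i\<in>A. \<Sum>m. w i * \<bar>s^m / fact m * (F^^m) h i\<bar>) =
      (\<Sum>m. \<Sum>i\<in>A. w i * \<bar>s^m / fact m * (F^^m) h i\<bar>)"
    by (rule suminf_sum[symmetric], rule summable_mult, rule summ)
  also have "(\<Sum>m. \<Sum>i\<in>A. w i * \<bar>s^m / fact m * (F^^m) h i\<bar>) \<le> (\<Sum>m. (s * q)^m / fact m * C)"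
  proof (rule suminf_le)
    fix m
    show "(\<Sum>i\<in>A. w i * \<bar>s^m / fact m * (F^^m) h i\<bar>) \<le> (s * q)^m / fact m * C"
      using mult_left_mono[OF le[of m], of "s^m / fact m"] \<open>0 \<le> s\<close>
      by (simp add: abs_mult sum_distrib_left power_mult_distrib algebra_simps)
    show "summable (\<lambda>m. \<Sum>i\<in>A. w i * \<bar>s^m / fact m * (F^^m) h i\<bar>)"
      using summ by (intro summable_sum summable_mult) simp
    show "summable (\<lambda>m. (s * q)^m / fact m * C)"
      using sums_summable[OF exp_real_sums] by (rule summable_mult2)
  qed
  also have "(\<Sum>m. (s * q)^m / fact m * C) = exp (s * q) * C"
    using sums_mult2[OF exp_real_sums, of "s * q" C] by (rule sums_unique[symmetric])
  finally show ?thesis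
    using \<open>0 \<le> s\<close> by (simp add: mult_left_mono algebra_simps mult_exp_exp)
qed

lemma least_positive_value:
  fixes w :: "nat \<Rightarrow> real"
  assumes "k < n" "0 < w k"
  obtains i0 where "i0 < n" "0 < w i0" "\<And>i. i < n \<Longrightarrow> 0 < w i \<Longrightarrow> w i0 \<le> w i"
proof -
  let ?S = "{i. i < n \<and> 0 < w i}"
  have "Min (w ` ?S) \<in> w ` ?S"
    using assms by (intro Min_in) auto
  then obtain i0 where "i0 \<in> ?S" "w i0 = Min (w ` ?S)"
    by force
  then show ?thesis
    using that[of i0] by simp
qed

lemma Cauchy_Schwarz_weighted_double_sum:
  fixes c a b :: "'a \<Rightarrow> 'b \<Rightarrow> real"
  assumes "\<And>i j. i \<in> A \<Longrightarrow> j \<in> B \<Longrightarrow> 0 \<le> c i j"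
  shows "(\<Sum>i\<in>A. \<Sum>j\<in>B. c i j * a i j * b i j)^2 \<le>
    (\<Sum>i\<in>A. \<Sum>j\<in>B. c i j * (a i j)^2) * (\<Sum>i\<in>A. \<Sum>j\<in>B. c i j * (b i j)^2)"
proof -
  have flat: "(\<Sum>i\<in>A. \<Sum>j\<in>B. F i j) = (\<Sum>p\<in>A \<times> B. F (fst p) (snd p))" for F :: "'a \<Rightarrow> 'b \<Rightarrow> real"
    by (simp add: sum.cartesian_product case_prod_beta')
  let ?a = "\<lambda>p. sqrt (c (fst p) (snd p)) * a (fst p) (snd p)"
  let ?b = "\<lambda>p. sqrt (c (fst p) (snd p)) * b (fst p) (snd p)"
  have "(\<Sum>p\<in>A \<times> B. ?a p * ?b p)^2 \<le> (\<Sum>p\<in>A \<times> B. (?a p)^2) * (\<Sum>p\<in>A \<times> B. (?b p)^2)"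
    by (rule Cauchy_Schwarz_ineq_sum)
  moreover have "?a p * ?b p = c (fst p) (snd p) * a (fst p) (snd p) * b (fst p) (snd p)"
    and "(?a p)^2 = c (fst p) (snd p) * (a (fst p) (snd p))^2"
    and "(?b p)^2 = c (fst p) (snd p) * (b (fst p) (snd p))^2" if "p \<in> A \<times> B" for p
    using assms[of "fst p" "snd p"] that
    by (auto simp: power_mult_distrib algebra_simps simp flip: power2_eq_square)
  ultimately show ?thesis
    unfolding flat by (simp cong: sum.cong)
qed

lemma max_diff_peel:
  fixes x y a :: real
  assumes "0 \<le> x" "0 \<le> y" "0 \<le> a" "0 < x \<Longrightarrow> a \<le> x" "0 < y \<Longrightarrow> a \<le> y"
  shows "max (x - y) 0 =
    (if 0 < x \<and> \<not> 0 < y then a else 0) + max (max (x - a) 0 - max (y - a) 0) 0"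
  using assms by auto

lemma pos_neg_part_diff_sq_le:
  fixes x y :: real
  shows "(max x 0 - max y 0)^2 + (max (- x) 0 - max (- y) 0)^2 \<le> (x - y)^2"
proof (cases "x \<ge> 0"; cases "y \<ge> 0")
  assume "x \<ge> 0" "\<not> y \<ge> 0"
  then have "0 \<le> x * (- y)" by (simp add: mult_nonneg_nonpos)
  with \<open>x \<ge> 0\<close> \<open>\<not> y \<ge> 0\<close> show ?thesis by (simp add: power2_eq_square algebra_simps)
next
  assume "\<not> x \<ge> 0" "y \<ge> 0"
  then have "0 \<le> (- x) * y" by (simp add: mult_nonpos_nonneg)
  with \<open>\<not> x \<ge> 0\<close> \<open>y \<ge> 0\<close> show ?thesis by (simp add: power2_eq_square algebra_simps)
qed (simp_all add: power2_eq_square algebra_simps)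

lemma half_le_one_minus_sqrt_one_minus:
  fixes a :: real
  assumes "0 \<le> a" "a \<le> 1"
  shows "a / 2 \<le> 1 - sqrt (1 - a)"
proof -
  have "sqrt (1 - a) \<le> sqrt ((1 - a / 2)^2)"
    using assms by (intro real_sqrt_le_mono) (simp add: power2_eq_square algebra_simps)
  also have "\<dots> = 1 - a / 2"
    using assms by simp
  finally show ?thesis by simp
qed

lemma exp_ln_ratio_le:
  fixes \<kappa> \<epsilon> N :: real
  assumes "0 < \<kappa>" "\<kappa> \<le> 1" "0 < \<epsilon>" "\<epsilon> \<le> 1" "1 \<le> N"
  shows "exp (- (100 * ln (N / (\<kappa> * \<epsilon>)) / 16)) / sqrt \<kappa> \<le> \<epsilon>"
proof -
  define L where "L = ln (N / (\<kappa> * \<epsilon>))"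
  have ratio: "1 \<le> N / (\<kappa> * \<epsilon>)"
    using assms mult_le_one[of \<kappa> \<epsilon>] by (simp add: field_simps)
  then have "0 \<le> L"
    by (simp add: L_def)
  then have "exp (- (100 * L / 16)) \<le> exp (- L)"
    by simp
  also have "\<dots> = \<kappa> * \<epsilon> / N"
    using ratio by (simp add: L_def exp_minus)
  finally have "exp (- (100 * L / 16)) / sqrt \<kappa> \<le> \<kappa> * \<epsilon> / N / sqrt \<kappa>"
    by (rule divide_right_mono) (use assms in simp)
  also have "\<dots> = \<epsilon> * (sqrt \<kappa> / N)"
    using assms by (simp add: field_simps real_sqrt_divide real_div_sqrt)
  also have "\<dots> \<le> \<epsilon>"
  proof (rule mult_left_le)
    show "sqrt \<kappa> / N \<le> 1"
    proof -
      have "sqrt \<kappa> \<le> 1"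
        using assms by simp
      then have "sqrt \<kappa> \<le> N"
        using assms by linarith
      then show ?thesis
        using assms by (simp add: divide_le_eq)
    qed
  qed (use assms in simp)
  finally show ?thesis
    by (simp add: L_def)
qed

definition mixing_error ::
  "nat \<Rightarrow> (nat \<Rightarrow> nat \<Rightarrow> real) \<Rightarrow> (nat \<Rightarrow> real) \<Rightarrow> (nat \<Rightarrow> real) \<Rightarrow> real \<Rightarrow> (nat \<Rightarrow> real) \<Rightarrow> real" where
  "mixing_error n R u v t x =
    (\<Sum>i<n. \<bar>u i * (\<Sum>j<n. (mat_exp n (\<lambda>a b. t * (R a b - id_mat a b)) i j - v i * u j) * x j)\<bar>)"

lemma mixing_time_cont_le:
  assumes "0 \<le> t" and "\<And>x. (\<Sum>i<n. \<bar>u i * x i\<bar>) = 1 \<Longrightarrow> mixing_error n R u v t x \<le> \<epsilon>"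
  shows "mixing_time_cont n R u v \<epsilon> \<le> ereal t"
  unfolding mixing_time_cont_def using assms by (intro Inf_lower) (auto simp: mixing_error_def)

lemma le_mixing_time_cont:
  assumes "\<And>t. 0 \<le> t \<Longrightarrow> (\<And>x. (\<Sum>i<n. \<bar>u i * x i\<bar>) = 1 \<Longrightarrow> mixing_error n R u v t x \<le> \<epsilon>) \<Longrightarrow>
      c \<le> ereal t"
  shows "c \<le> mixing_time_cont n R u v \<epsilon>"
  unfolding mixing_time_cont_def using assms by (intro Inf_greatest) (auto simp: mixing_error_def)

section \<open>The chain defined by \<open>R\<close>\<close>

locale pf_chain =
  fixes n :: nat and R :: "nat \<Rightarrow> nat \<Rightarrow> real" and u v :: "nat \<Rightarrow> real"
  assumes nonneg: "\<forall>i<n. \<forall>j<n. R i j \<ge> 0"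
    and u_pos: "\<forall>i<n. u i > 0" and v_pos: "\<forall>i<n. v i > 0"
    and left_eig: "\<forall>j<n. (\<Sum>i<n. u i * R i j) = u j"
    and right_eig: "\<forall>i<n. (\<Sum>j<n. R i j * v j) = v i"
    and normalized: "(\<Sum>i<n. u i * v i) = 1"
begin

text \<open>Conjugating by \<open>diag v\<close> turns \<open>R\<close> into the Markov operator \<open>P\<close> with stationary
  distribution \<open>\<pi>\<close>; \<open>flow i j = \<pi> i P(i,j)\<close> is its edge measure, with both marginals equal
  to \<open>\<pi>\<close>, but in general not symmetric.\<close>

abbreviation \<pi> :: "nat \<Rightarrow> real" where "\<pi> i \<equiv> u i * v i"

abbreviation flow :: "nat \<Rightarrow> nat \<Rightarrow> real" where "flow i j \<equiv> u i * R i j * v j"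

definition P :: "(nat \<Rightarrow> real) \<Rightarrow> nat \<Rightarrow> real" where
  "P f i = (\<Sum>j<n. R i j * v j * f j) / v i"

definition T :: "(nat \<Rightarrow> real) \<Rightarrow> nat \<Rightarrow> real" where
  "T f i = (f i + P f i) / 2"

definition lazy_mat :: "nat \<Rightarrow> nat \<Rightarrow> real" where
  "lazy_mat a b = (id_mat a b + R a b) / 2"

definition mean :: "(nat \<Rightarrow> real) \<Rightarrow> real" where
  "mean f = (\<Sum>i<n. \<pi> i * f i)"

definition sqnorm :: "(nat \<Rightarrow> real) \<Rightarrow> real" where
  "sqnorm f = (\<Sum>i<n. \<pi> i * (f i)^2)"

definition variance :: "(nat \<Rightarrow> real) \<Rightarrow> real" where
  "variance f = sqnorm (\<lambda>i. f i - mean f)"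

definition energy :: "(nat \<Rightarrow> real) \<Rightarrow> real" where
  "energy f = (\<Sum>i<n. \<Sum>j<n. flow i j * (f i - f j)^2) / 2"

definition cut :: "nat set \<Rightarrow> real" where
  "cut S = (\<Sum>i\<in>S. \<Sum>j\<in>{..<n} - S. flow i j)"

definition admissible :: "nat set \<Rightarrow> bool" where
  "admissible S \<longleftrightarrow> S \<noteq> {} \<and> S \<subseteq> {..<n} \<and> (\<Sum>i\<in>S. \<pi> i) \<le> 1/2"

lemma v_nonzero: "i < n \<Longrightarrow> v i \<noteq> 0"
  using v_pos by force

lemma abs_u_eq: "i < n \<Longrightarrow> \<bar>u i\<bar> = u i"
  using u_pos by force

lemma abs_v_eq: "i < n \<Longrightarrow> \<bar>v i\<bar> = v i"
  using v_pos by force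

lemma pi_pos: "i < n \<Longrightarrow> \<pi> i > 0"
  using u_pos v_pos by simp

lemma pi_nonneg: "i < n \<Longrightarrow> \<pi> i \<ge> 0"
  using pi_pos less_imp_le by blast

lemma flow_nonneg: "i < n \<Longrightarrow> j < n \<Longrightarrow> flow i j \<ge> 0"
  using u_pos v_pos nonneg by (simp add: less_imp_le)

lemma sum_flow_row: "i < n \<Longrightarrow> (\<Sum>j<n. flow i j) = \<pi> i"
  using right_eig by (simp add: mult.assoc sum_distrib_left[symmetric])

lemma sum_flow_col: "j < n \<Longrightarrow> (\<Sum>i<n. flow i j) = \<pi> j"
  using left_eig by (simp add: sum_distrib_right[symmetric])

lemma n_pos: "n > 0"
  using normalized by (cases n) auto

lemma sum_pi_pos: "S \<subseteq> {..<n} \<Longrightarrow> S \<noteq> {} \<Longrightarrow> (\<Sum>i\<in>S. \<pi> i) > 0"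
  using pi_pos finite_subset[of S "{..<n}"] by (intro sum_pos) auto

lemma min_pi_bounds:
  assumes "\<kappa> = Min {u i * v i | i. i < n}"
  shows "0 < \<kappa>" "\<kappa> \<le> 1" "\<And>i. i < n \<Longrightarrow> \<kappa> \<le> \<pi> i"
proof -
  have fin: "finite {u i * v i | i. i < n}" and ne: "{u i * v i | i. i < n} \<noteq> {}"
    using n_pos by auto
  show le: "\<kappa> \<le> \<pi> i" if "i < n" for i
    unfolding assms using fin that by (intro Min_le) auto
  show "0 < \<kappa>"
    using Min_in[OF fin ne] pi_pos unfolding assms by auto
  show "\<kappa> \<le> 1"
    using le[OF n_pos] member_le_sum[of 0 "{..<n}" \<pi>] n_pos pi_nonneg normalized by simp
qed

lemma edge_expansion_set_eq:
  assumes "S \<subseteq> {..<n}"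
  shows "edge_expansion_set n R u v S = cut S / (\<Sum>i\<in>S. \<pi> i)"
proof -
  have "(\<Sum>i\<in>S. \<Sum>j<n. flow i j) = (\<Sum>i\<in>S. \<pi> i)"
    using assms sum_flow_row by (intro sum.cong) auto
  then show ?thesis by (simp add: edge_expansion_set_def cut_def)
qed

lemma cut_nonneg: "S \<subseteq> {..<n} \<Longrightarrow> cut S \<ge> 0"
  unfolding cut_def using flow_nonneg by (intro sum_nonneg) auto

lemma cut_le:
  assumes "S \<subseteq> {..<n}"
  shows "cut S \<le> (\<Sum>i\<in>S. \<pi> i)"
proof -
  have "cut S \<le> (\<Sum>i\<in>S. \<Sum>j<n. flow i j)"
    unfolding cut_def using assms flow_nonneg by (intro sum_mono sum_mono2) auto
  also have "\<dots> = (\<Sum>i\<in>S. \<pi> i)"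
    using assms sum_flow_row by (intro sum.cong) auto
  finally show ?thesis .
qed

lemma edge_expansion_eq_Inf:
  "edge_expansion n R u v = Inf {ereal (edge_expansion_set n R u v S) | S. admissible S}"
  by (simp add: edge_expansion_def admissible_def)

lemma edge_expansion_le:
  "admissible S \<Longrightarrow> edge_expansion n R u v \<le> ereal (edge_expansion_set n R u v S)"
  unfolding edge_expansion_eq_Inf by (rule Inf_lower) blast

lemma le_edge_expansion:
  "(\<And>S. admissible S \<Longrightarrow> r \<le> edge_expansion_set n R u v S) \<Longrightarrow> ereal r \<le> edge_expansion n R u v"
  unfolding edge_expansion_eq_Inf by (rule Inf_greatest) auto

lemma edge_expansion_set_bounds:
  assumes "admissible S"
  shows "0 \<le> edge_expansion_set n R u v S" "edge_expansion_set n R u v S \<le> 1"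
proof -
  have S: "S \<subseteq> {..<n}" "S \<noteq> {}"
    using assms by (auto simp: admissible_def)
  show "0 \<le> edge_expansion_set n R u v S" "edge_expansion_set n R u v S \<le> 1"
    using cut_nonneg[OF S(1)] cut_le[OF S(1)] sum_pi_pos[OF S]
    by (simp_all add: edge_expansion_set_eq[OF S(1)])
qed

lemma edge_expansion_nonneg: "0 \<le> edge_expansion n R u v"
  using le_edge_expansion[of 0] edge_expansion_set_bounds by (simp add: zero_ereal_def)

lemma admissible_exists: "2 \<le> n \<Longrightarrow> \<exists>S. admissible S"
proof -
  assume "2 \<le> n"
  then have "\<pi> 0 + \<pi> 1 \<le> (\<Sum>i<n. \<pi> i)"
    using sum_mono2[of "{..<n}" "{0, 1}" \<pi>] pi_nonneg by auto
  then have "\<pi> 0 \<le> 1/2 \<or> \<pi> 1 \<le> 1/2"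
    using normalized by linarith
  with \<open>2 \<le> n\<close> have "admissible {0} \<or> admissible {1}"
    by (auto simp: admissible_def)
  then show ?thesis by blast
qed

lemma pi_mult_P:
  assumes "i < n"
  shows "\<pi> i * P f i = (\<Sum>j<n. flow i j * f j)"
proof -
  have "\<pi> i * P f i = u i * (\<Sum>j<n. R i j * v j * f j)"
    using v_nonzero[OF assms] by (simp add: P_def)
  then show ?thesis by (simp add: sum_distrib_left mult.assoc)
qed

lemma P_cong: "(\<And>j. j < n \<Longrightarrow> f j = g j) \<Longrightarrow> P f i = P g i"
  by (simp add: P_def)

lemma T_cong: "(\<And>j. j < n \<Longrightarrow> f j = g j) \<Longrightarrow> i < n \<Longrightarrow> T f i = T g i"
  using P_cong[of f g i] by (simp add: T_def)

lemma P_add_const: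
  assumes "i < n"
  shows "P (\<lambda>j. f j + c) i = P f i + c"
proof -
  have "(\<Sum>j<n. R i j * v j * (f j + c)) = (\<Sum>j<n. R i j * v j * f j) + v i * c"
    using right_eig assms by (simp add: distrib_left sum.distrib sum_distrib_right[symmetric])
  with v_nonzero[OF assms] show ?thesis by (simp add: P_def add_divide_distrib)
qed

lemma T_add_const: "i < n \<Longrightarrow> T (\<lambda>j. f j + c) i = T f i + c"
  using P_add_const by (simp add: T_def)

lemma P_bounds:
  assumes "\<And>j. j < n \<Longrightarrow> a \<le> f j \<and> f j \<le> b" and "i < n"
  shows "a \<le> P f i \<and> P f i \<le> b"
proof -
  have "(\<Sum>j<n. R i j * v j * a) \<le> (\<Sum>j<n. R i j * v j * f j)"
    and "(\<Sum>j<n. R i j * v j * f j) \<le> (\<Sum>j<n. R i j * v j * b)"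
    using assms nonneg v_pos by (auto intro!: sum_mono mult_left_mono)
  moreover have "(\<Sum>j<n. R i j * v j * c) = v i * c" for c
    using right_eig assms(2) by (simp add: sum_distrib_right[symmetric])
  ultimately show ?thesis
    using v_pos assms(2) by (simp add: P_def field_simps)
qed

lemma P_pow_bounds:
  "(\<And>j. j < n \<Longrightarrow> a \<le> f j \<and> f j \<le> b) \<Longrightarrow> i < n \<Longrightarrow> a \<le> (P^^m) f i \<and> (P^^m) f i \<le> b"
  by (induction m arbitrary: i) (auto intro!: P_bounds)

lemma sum_flow_mult_left: "(\<Sum>i<n. \<Sum>j<n. flow i j * g i) = (\<Sum>i<n. \<pi> i * g i)"
proof -
  have "(\<Sum>i<n. \<Sum>j<n. flow i j * g i) = (\<Sum>i<n. (\<Sum>j<n. flow i j) * g i)"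
    by (simp add: sum_distrib_right)
  also have "\<dots> = (\<Sum>i<n. \<pi> i * g i)"
    by (intro sum.cong) (simp_all add: sum_flow_row)
  finally show ?thesis .
qed

lemma sum_flow_mult_right: "(\<Sum>i<n. \<Sum>j<n. flow i j * g j) = (\<Sum>j<n. \<pi> j * g j)"
proof -
  have "(\<Sum>i<n. \<Sum>j<n. flow i j * g j) = (\<Sum>j<n. (\<Sum>i<n. flow i j) * g j)"
    by (subst sum.swap) (simp add: sum_distrib_right)
  also have "\<dots> = (\<Sum>j<n. \<pi> j * g j)"
    by (intro sum.cong) (simp_all add: sum_flow_col)
  finally show ?thesis .
qed

lemma mean_P: "mean (P f) = mean f"
proof -
  have "mean (P f) = (\<Sum>i<n. \<Sum>j<n. flow i j * f j)"
    unfolding mean_def by (intro sum.cong) (simp_all add: pi_mult_P)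
  then show ?thesis by (simp only: sum_flow_mult_right mean_def)
qed

lemma mean_T: "mean (T f) = mean f"
  using mean_P[of f]
  by (simp add: mean_def T_def sum_divide_distrib[symmetric] distrib_left sum.distrib)

lemma sqnorm_nonneg: "sqnorm f \<ge> 0"
  unfolding sqnorm_def using pi_pos by (intro sum_nonneg) (simp add: less_imp_le)

lemma sqnorm_P_le: "sqnorm (P f) \<le> sqnorm f"
proof -
  have "\<pi> i * (P f i)^2 \<le> (\<Sum>j<n. flow i j * (f j)^2)" if i: "i < n" for i
  proof -
    let ?w = "\<lambda>j. sqrt (R i j * v j)"
    have w: "?w j ^ 2 = R i j * v j" if "j < n" for j
      using nonneg v_pos i that by (simp add: less_imp_le)
    have "(\<Sum>j<n. ?w j * (?w j * f j))^2 \<le> (\<Sum>j<n. (?w j)^2) * (\<Sum>j<n. (?w j * f j)^2)"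
      by (rule Cauchy_Schwarz_ineq_sum)
    then have cs: "(\<Sum>j<n. R i j * v j * f j)^2 \<le> v i * (\<Sum>j<n. R i j * v j * (f j)^2)"
      using right_eig i w
      by (simp add: mult.assoc[symmetric] power_mult_distrib power2_eq_square[symmetric])
    have vi: "v i > 0" and ui: "u i > 0"
      using u_pos v_pos i by auto
    have "\<pi> i * (P f i)^2 = u i / v i * (\<Sum>j<n. R i j * v j * f j)^2"
      using vi by (simp add: P_def power_divide power2_eq_square)
    also have "\<dots> \<le> u i / v i * (v i * (\<Sum>j<n. R i j * v j * (f j)^2))"
      using cs ui vi by (intro mult_left_mono) simp_all
    also have "\<dots> = (\<Sum>j<n. flow i j * (f j)^2)"
      using vi by (simp add: sum_distrib_left mult.assoc)
    finally show ?thesis .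
  qed
  then have "sqnorm (P f) \<le> (\<Sum>i<n. \<Sum>j<n. flow i j * (f j)^2)"
    unfolding sqnorm_def by (intro sum_mono) auto
  then show ?thesis by (simp only: sum_flow_mult_right sqnorm_def)
qed

lemma energy_eq: "energy f = sqnorm f - (\<Sum>i<n. \<Sum>j<n. flow i j * f i * f j)"
proof -
  have "flow i j * (f i - f j)^2 =
      flow i j * (f i)^2 + flow i j * (f j)^2 - 2 * (flow i j * f i * f j)" for i j
    by (simp add: power2_eq_square algebra_simps)
  then show ?thesis
    by (simp add: energy_def sqnorm_def sum.distrib sum_subtractf sum_distrib_left[symmetric]
        sum_flow_mult_left sum_flow_mult_right)
qed

lemma energy_nonneg: "energy f \<ge> 0"
  unfolding energy_def using flow_nonneg by (auto intro!: sum_nonneg divide_nonneg_nonneg)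

lemma sqnorm_T_le: "sqnorm (T f) \<le> sqnorm f - energy f / 2"
proof -
  have "sqnorm (T f) =
      (\<Sum>i<n. (\<pi> i * (f i)^2 + 2 * (f i * (\<pi> i * P f i)) + \<pi> i * (P f i)^2) / 4)"
    unfolding sqnorm_def by (intro sum.cong) (simp_all add: T_def power2_eq_square algebra_simps)
  also have "\<dots> = (sqnorm f + 2 * (\<Sum>i<n. f i * (\<pi> i * P f i)) + sqnorm (P f)) / 4"
    by (simp add: sqnorm_def sum.distrib sum_divide_distrib[symmetric] sum_distrib_left)
  also have "(\<Sum>i<n. f i * (\<pi> i * P f i)) = (\<Sum>i<n. \<Sum>j<n. flow i j * f i * f j)"
  proof (intro sum.cong refl)
    fix i assume "i \<in> {..<n}"
    then have "\<pi> i * P f i = (\<Sum>j<n. flow i j * f j)"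
      by (simp add: pi_mult_P)
    then show "f i * (\<pi> i * P f i) = (\<Sum>j<n. flow i j * f i * f j)"
      by (simp add: sum_distrib_left algebra_simps)
  qed
  finally show ?thesis
    using sqnorm_P_le[of f] energy_eq[of f] by (simp add: field_simps)
qed

lemma sqnorm_shift: "sqnorm (\<lambda>i. f i - c) = sqnorm f - 2 * c * mean f + c^2"
proof -
  have "\<pi> i * (f i - c)^2 = \<pi> i * (f i)^2 - 2 * c * (\<pi> i * f i) + c^2 * \<pi> i" for i
    by (simp add: power2_eq_square algebra_simps)
  then show ?thesis
    by (simp add: sqnorm_def mean_def sum.distrib sum_subtractf sum_distrib_left[symmetric]
        normalized)
qed

lemma mean_shift: "mean (\<lambda>i. f i - c) = mean f - c"
  using normalized
  by (simp add: mean_def right_diff_distrib sum_subtractf sum_distrib_right[symmetric])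

lemma variance_le_sqnorm: "variance f \<le> sqnorm f"
  by (simp add: variance_def sqnorm_shift power2_eq_square)

lemma variance_nonneg: "variance f \<ge> 0"
  by (simp add: variance_def sqnorm_nonneg)

section \<open>Cheeger's inequality\<close>

lemma cut_eq_sum_if:
  assumes "S \<subseteq> {..<n}"
  shows "(\<Sum>i<n. \<Sum>j<n. if i \<in> S \<and> j \<notin> S then flow i j else 0) = cut S"
proof -
  have "(\<Sum>i<n. \<Sum>j<n. if i \<in> S \<and> j \<notin> S then flow i j else 0) =
      (\<Sum>i<n. if i \<in> S then \<Sum>j\<in>{..<n} - S. flow i j else 0)"
    by (intro sum.cong) (auto simp: sum.If_cases Diff_eq Collect_neg_eq)
  also have "\<dots> = cut S"
    using assms by (simp add: sum.If_cases cut_def Int_absorb1)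
  finally show ?thesis .
qed

lemma support_peel_psubset:
  fixes w :: "nat \<Rightarrow> real"
  assumes "k < n" "0 < w k" "w k \<le> a"
  shows "{i. i < n \<and> max (w i - a) 0 > 0} \<subset> {i. i < n \<and> w i > 0}"
proof
  show "{i. i < n \<and> max (w i - a) 0 > 0} \<subseteq> {i. i < n \<and> w i > 0}"
    using assms by (auto simp: less_max_iff_disj)
  have "k \<in> {i. i < n \<and> w i > 0}" "k \<notin> {i. i < n \<and> max (w i - a) 0 > 0}"
    using assms by (simp_all add: less_max_iff_disj)
  then show "{i. i < n \<and> max (w i - a) 0 > 0} \<noteq> {i. i < n \<and> w i > 0}"
    by blast
qed

lemma sum_pi_peel:
  assumes "\<forall>i<n. 0 \<le> w i" "0 \<le> a" "\<And>i. i < n \<Longrightarrow> 0 < w i \<Longrightarrow> a \<le> w i"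
  shows "(\<Sum>i<n. \<pi> i * w i) =
    a * (\<Sum>i | i < n \<and> w i > 0. \<pi> i) + (\<Sum>i<n. \<pi> i * max (w i - a) 0)"
proof -
  have "(\<Sum>i<n. \<pi> i * w i) = (\<Sum>i<n. (if w i > 0 then \<pi> i * a else 0) + \<pi> i * max (w i - a) 0)"
    using assms by (intro sum.cong) (auto simp: algebra_simps)
  also have "\<dots> = a * (\<Sum>i | i < n \<and> w i > 0. \<pi> i) + (\<Sum>i<n. \<pi> i * max (w i - a) 0)"
    by (simp add: sum.distrib sum.If_cases sum_distrib_left mult.commute Int_def conj_commute)
  finally show ?thesis .
qed

lemma sum_flow_peel:
  assumes "\<forall>i<n. 0 \<le> w i" "0 \<le> a" "\<And>i. i < n \<Longrightarrow> 0 < w i \<Longrightarrow> a \<le> w i"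
  shows "(\<Sum>i<n. \<Sum>j<n. flow i j * max (w i - w j) 0) =
    a * cut {i. i < n \<and> w i > 0} +
    (\<Sum>i<n. \<Sum>j<n. flow i j * max (max (w i - a) 0 - max (w j - a) 0) 0)"
proof -
  let ?S = "{i. i < n \<and> w i > 0}"
  have "(\<Sum>i<n. \<Sum>j<n. flow i j * max (w i - w j) 0) =
      (\<Sum>i<n. \<Sum>j<n. a * (if i \<in> ?S \<and> j \<notin> ?S then flow i j else 0)
        + flow i j * max (max (w i - a) 0 - max (w j - a) 0) 0)"
    using assms
    by (intro sum.cong refl, subst max_diff_peel[of _ _ a]) (auto simp: algebra_simps)
  also have "\<dots> = a * cut ?S + (\<Sum>i<n. \<Sum>j<n. flow i j * max (max (w i - a) 0 - max (w j - a) 0) 0)"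
    using cut_eq_sum_if[of ?S] by (simp add: subset_eq sum.distrib flip: sum_distrib_left)
  finally show ?thesis .
qed

lemma sum_flow_sq_add_le: "(\<Sum>i<n. \<Sum>j<n. flow i j * (f i + f j)^2) \<le> 4 * sqnorm f"
proof -
  have "(\<Sum>i<n. \<Sum>j<n. flow i j * (f i + f j)^2) \<le>
      (\<Sum>i<n. \<Sum>j<n. 2 * (flow i j * (f i)^2) + 2 * (flow i j * (f j)^2))"
  proof (intro sum_mono)
    fix i j assume "i \<in> {..<n}" "j \<in> {..<n}"
    then have "flow i j \<ge> 0"
      by (simp add: flow_nonneg)
    moreover have "(f i + f j)^2 \<le> 2 * (f i)^2 + 2 * (f j)^2"
      using sum_squares_ge_zero[of "f i - f j" 0] by (simp add: power2_eq_square algebra_simps)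
    ultimately have "flow i j * (f i + f j)^2 \<le> flow i j * (2 * (f i)^2 + 2 * (f j)^2)"
      by (simp add: mult_left_mono)
    then show "flow i j * (f i + f j)^2 \<le> 2 * (flow i j * (f i)^2) + 2 * (flow i j * (f j)^2)"
      by (simp add: algebra_simps)
  qed
  also have "\<dots> = 4 * sqnorm f"
    by (simp add: sum.distrib sqnorm_def sum_flow_mult_left sum_flow_mult_right
        flip: sum_distrib_left)
  finally show ?thesis .
qed

lemma sum_pi_not:
  "(\<Sum>i | i < n \<and> \<not> Q i. \<pi> i) = 1 - (\<Sum>i | i < n \<and> Q i. \<pi> i)"
proof -
  have "(\<Sum>i | i < n \<and> \<not> Q i. \<pi> i) = (\<Sum>i\<in>{..<n} - {i. i < n \<and> Q i}. \<pi> i)"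
    by (rule sum.cong) auto
  also have "\<dots> = 1 - (\<Sum>i | i < n \<and> Q i. \<pi> i)"
    by (subst sum_diff) (auto simp: normalized)
  finally show ?thesis .
qed

lemma sum_pi_less_le_half:
  fixes g :: "nat \<Rightarrow> real"
  assumes "\<And>a. a \<in> g ` {..<n} \<Longrightarrow> a < m \<Longrightarrow> (\<Sum>i | i < n \<and> g i > a. \<pi> i) > 1/2"
  shows "(\<Sum>i | i < n \<and> g i < m. \<pi> i) \<le> 1/2"
proof (cases "{i. i < n \<and> g i < m} = {}")
  case True
  then show ?thesis by (simp del: Collect_empty_eq)
next
  case False
  define b where "b = Max (g ` {i. i < n \<and> g i < m})"
  have "b \<in> g ` {i. i < n \<and> g i < m}"
    using False by (simp add: b_def)
  then have "b < m" and "b \<in> g ` {..<n}"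
    by auto
  have "g i < m \<longleftrightarrow> \<not> g i > b" if "i < n" for i
  proof
    assume "g i < m"
    then have "g i \<le> b"
      unfolding b_def by (intro Max_ge) (use that in auto)
    then show "\<not> g i > b" by simp
  qed (use \<open>b < m\<close> in simp)
  then have "{i. i < n \<and> g i < m} = {i. i < n \<and> \<not> g i > b}"
    by blast
  then show ?thesis
    using assms[OF \<open>b \<in> g ` {..<n}\<close> \<open>b < m\<close>] sum_pi_not[of "\<lambda>i. g i > b"] by simp
qed

lemma exists_median:
  fixes g :: "nat \<Rightarrow> real"
  shows "\<exists>m. (\<Sum>i | i < n \<and> g i > m. \<pi> i) \<le> 1/2 \<and> (\<Sum>i | i < n \<and> g i < m. \<pi> i) \<le> 1/2"
proof -
  define C where "C = {a \<in> g ` {..<n}. (\<Sum>i | i < n \<and> g i > a. \<pi> i) \<le> 1/2}"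
  have none_above: "{i. i < n \<and> g i > Max (g ` {..<n})} = {}"
    by (auto simp: not_less intro!: Max_ge)
  have "Max (g ` {..<n}) \<in> g ` {..<n}"
    using n_pos by (intro Max_in) auto
  then have "Max (g ` {..<n}) \<in> C"
    unfolding C_def mem_Collect_eq none_above by simp
  moreover have finC: "finite C"
    by (simp add: C_def)
  ultimately have "Min C \<in> C"
    by (intro Min_in) auto
  moreover have "(\<Sum>i | i < n \<and> g i > a. \<pi> i) > 1/2" if "a \<in> g ` {..<n}" "a < Min C" for a
  proof -
    have "a \<notin> C"
      using that finC Min_le[of C a] by (meson leD)
    with that(1) show ?thesis
      by (simp add: C_def not_le)
  qed
  ultimately show ?thesis
    using sum_pi_less_le_half[of g "Min C"] by (auto simp: C_def)
qed

lemma energy_cauchy_schwarz: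
  "(\<Sum>i<n. \<Sum>j<n. flow i j * \<bar>f i - f j\<bar> * (f i + f j))^2 \<le> 8 * (sqnorm f * energy f)"
proof -
  have "(\<Sum>i<n. \<Sum>j<n. flow i j * \<bar>f i - f j\<bar> * (f i + f j))^2 \<le>
      (\<Sum>i<n. \<Sum>j<n. flow i j * \<bar>f i - f j\<bar>^2) * (\<Sum>i<n. \<Sum>j<n. flow i j * (f i + f j)^2)"
    by (rule Cauchy_Schwarz_weighted_double_sum) (simp add: flow_nonneg)
  also have "\<dots> \<le> (2 * energy f) * (4 * sqnorm f)"
    using sum_flow_sq_add_le[of f] energy_nonneg[of f]
    by (intro mult_mono) (auto simp: energy_def intro!: sum_nonneg mult_nonneg_nonneg flow_nonneg)
  finally show ?thesis
    by (simp add: mult_ac)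
qed

lemma energy_pos_part_add_neg_part_le:
  "energy (\<lambda>i. max (g i - m) 0) + energy (\<lambda>i. max (m - g i) 0) \<le> energy g"
  unfolding energy_def add_divide_distrib[symmetric] sum.distrib[symmetric] distrib_left[symmetric]
proof (intro divide_right_mono sum_mono mult_left_mono)
  fix i j assume "i \<in> {..<n}" "j \<in> {..<n}"
  then show "0 \<le> flow i j"
    by (simp add: flow_nonneg)
  show "(max (g i - m) 0 - max (g j - m) 0)^2 + (max (m - g i) 0 - max (m - g j) 0)^2 \<le>
      (g i - g j)^2"
    using pos_neg_part_diff_sq_le[of "g i - m" "g j - m"] by simp
qed simp

lemma sqnorm_pos_part_add_neg_part:
  "sqnorm (\<lambda>i. max (g i - m) 0) + sqnorm (\<lambda>i. max (m - g i) 0) = sqnorm (\<lambda>i. g i - m)"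
  unfolding sqnorm_def sum.distrib[symmetric]
  by (intro sum.cong refl) (simp add: max_def power2_eq_square algebra_simps)

context
  fixes \<phi> :: real
  assumes expansion_ge: "\<And>S. admissible S \<Longrightarrow> \<phi> \<le> edge_expansion_set n R u v S"
begin

lemma cut_ge:
  assumes "S \<subseteq> {..<n}" "(\<Sum>i\<in>S. \<pi> i) \<le> 1/2"
  shows "\<phi> * (\<Sum>i\<in>S. \<pi> i) \<le> cut S"
proof (cases "S = {}")
  case False
  then have "\<phi> \<le> cut S / (\<Sum>i\<in>S. \<pi> i)"
    using expansion_ge[of S] assms by (simp add: admissible_def edge_expansion_set_eq)
  then show ?thesis
    using sum_pi_pos[OF assms(1) False] by (simp add: field_simps)
qed (simp add: cut_def)

text \<open>The discrete co-area inequality.  The induction on the size of the support of \<open>w\<close>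
  peels off its bottom layer: the least positive value times the indicator of the support.\<close>

lemma coarea_ineq:
  assumes "\<forall>i<n. w i \<ge> 0" and "(\<Sum>i | i < n \<and> w i > 0. \<pi> i) \<le> 1/2"
  shows "\<phi> * (\<Sum>i<n. \<pi> i * w i) \<le> (\<Sum>i<n. \<Sum>j<n. flow i j * max (w i - w j) 0)"
  using assms
proof (induction "card {i. i < n \<and> w i > 0}" arbitrary: w rule: less_induct)
  case less
  define S where "S = {i. i < n \<and> w i > 0}"
  have finS: "finite S" and S_sub: "S \<subseteq> {..<n}"
    by (auto simp: S_def)
  show ?case
  proof (cases "\<exists>k<n. 0 < w k")
    case False
    then have "\<forall>i<n. w i = 0"
      using less.prems(1) by force
    then show ?thesis by simp
  next
    case True
    then obtain k where "k < n" "0 < w k"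
      by blast
    then obtain i0 where i0: "i0 < n" "0 < w i0" and a_le: "\<And>i. i < n \<Longrightarrow> 0 < w i \<Longrightarrow> w i0 \<le> w i"
      using least_positive_value by blast
    define w' where "w' i = max (w i - w i0) 0" for i
    have supp': "{i. i < n \<and> w' i > 0} \<subset> S"
      unfolding w'_def S_def using i0 by (intro support_peel_psubset[where k = i0]) simp_all
    then have "(\<Sum>i | i < n \<and> w' i > 0. \<pi> i) \<le> (\<Sum>i\<in>S. \<pi> i)"
      using finS S_sub by (intro sum_mono2) (auto simp: pi_nonneg)
    with psubset_card_mono[OF finS supp'] have "\<phi> * (\<Sum>i<n. \<pi> i * w' i) \<le>
        (\<Sum>i<n. \<Sum>j<n. flow i j * max (w' i - w' j) 0)"
      using less.hyps[of w'] less.prems(2) by (simp add: w'_def S_def)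
    moreover have "w i0 * (\<phi> * (\<Sum>i\<in>S. \<pi> i)) \<le> w i0 * cut S"
      using cut_ge[OF S_sub] less.prems(2) i0 by (simp add: S_def)
    moreover have "(\<Sum>i<n. \<pi> i * w i) = w i0 * (\<Sum>i\<in>S. \<pi> i) + (\<Sum>i<n. \<pi> i * w' i)"
      using sum_pi_peel[OF less.prems(1)] i0 a_le by (simp add: w'_def S_def)
    moreover have "(\<Sum>i<n. \<Sum>j<n. flow i j * max (w i - w j) 0) =
        w i0 * cut S + (\<Sum>i<n. \<Sum>j<n. flow i j * max (w' i - w' j) 0)"
      using sum_flow_peel[OF less.prems(1)] i0 a_le by (simp add: w'_def S_def)
    ultimately show ?thesis
      by (simp add: algebra_simps)
  qed
qed

context
  assumes expansion_nonneg: "0 \<le> \<phi>"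
begin

lemma energy_ge_of_small_support:
  assumes f_nonneg: "\<forall>i<n. f i \<ge> 0" and small: "(\<Sum>i | i < n \<and> f i > 0. \<pi> i) \<le> 1/2"
  shows "\<phi>^2 / 8 * sqnorm f \<le> energy f"
proof -
  let ?D = "\<Sum>i<n. \<Sum>j<n. flow i j * \<bar>f i - f j\<bar> * (f i + f j)"
  have "{i. i < n \<and> (f i)^2 > 0} = {i. i < n \<and> f i > 0}"
    using f_nonneg by (auto simp: less_le)
  then have "\<phi> * sqnorm f \<le> (\<Sum>i<n. \<Sum>j<n. flow i j * max ((f i)^2 - (f j)^2) 0)"
    using coarea_ineq[of "\<lambda>i. (f i)^2"] small by (simp add: sqnorm_def)
  also have "\<dots> \<le> ?D"
  proof (intro sum_mono)
    fix i j assume ij: "i \<in> {..<n}" "j \<in> {..<n}"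
    have "(f i)^2 - (f j)^2 = (f i - f j) * (f i + f j)"
      by (simp add: power2_eq_square algebra_simps)
    with ij f_nonneg have "max ((f i)^2 - (f j)^2) 0 \<le> \<bar>f i - f j\<bar> * (f i + f j)"
      by (simp add: mult_right_mono)
    moreover have "0 \<le> flow i j"
      using ij by (simp add: flow_nonneg)
    ultimately have "flow i j * max ((f i)^2 - (f j)^2) 0 \<le> flow i j * (\<bar>f i - f j\<bar> * (f i + f j))"
      by (rule mult_left_mono)
    then show "flow i j * max ((f i)^2 - (f j)^2) 0 \<le> flow i j * \<bar>f i - f j\<bar> * (f i + f j)"
      by (simp only: mult.assoc)
  qed
  finally have "(\<phi> * sqnorm f)^2 \<le> ?D^2"
    using expansion_nonneg sqnorm_nonneg[of f] by (intro power_mono) simp_all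
  also have "\<dots> \<le> 8 * (sqnorm f * energy f)"
    by (rule energy_cauchy_schwarz)
  finally have "sqnorm f * (\<phi>^2 / 8 * sqnorm f) \<le> sqnorm f * energy f"
    by (simp add: field_simps power2_eq_square)
  show ?thesis
  proof (cases "sqnorm f = 0")
    case False
    then have "sqnorm f > 0"
      using sqnorm_nonneg[of f] by simp
    with \<open>sqnorm f * (\<phi>^2 / 8 * sqnorm f) \<le> sqnorm f * energy f\<close> show ?thesis
      by simp
  qed (simp add: energy_nonneg)
qed

lemma cheeger_ineq:
  assumes "mean g = 0"
  shows "\<phi>^2 / 8 * sqnorm g \<le> energy g"
proof -
  obtain m where m: "(\<Sum>i | i < n \<and> g i > m. \<pi> i) \<le> 1/2" "(\<Sum>i | i < n \<and> g i < m. \<pi> i) \<le> 1/2"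
    using exists_median by blast
  define gp where "gp = (\<lambda>i. max (g i - m) 0)"
  define gn where "gn = (\<lambda>i. max (m - g i) 0)"
  have "\<phi>^2 / 8 * sqnorm gp \<le> energy gp"
    by (rule energy_ge_of_small_support) (use m(1) in \<open>simp_all add: gp_def less_max_iff_disj\<close>)
  moreover have "\<phi>^2 / 8 * sqnorm gn \<le> energy gn"
    by (rule energy_ge_of_small_support) (use m(2) in \<open>simp_all add: gn_def less_max_iff_disj\<close>)
  moreover have "sqnorm g \<le> sqnorm gp + sqnorm gn"
    using sqnorm_pos_part_add_neg_part[of g m] assms by (simp add: sqnorm_shift gp_def gn_def)
  then have "\<phi>^2 / 8 * sqnorm g \<le> \<phi>^2 / 8 * (sqnorm gp + sqnorm gn)"
    by (simp add: mult_left_mono)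
  moreover have "energy gp + energy gn \<le> energy g"
    using energy_pos_part_add_neg_part_le[of g m] by (simp add: gp_def gn_def)
  ultimately show ?thesis
    by (simp add: distrib_left)
qed

lemma sqnorm_T_contraction:
  assumes "mean g = 0"
  shows "sqnorm (T g) \<le> (1 - \<phi>^2 / 16) * sqnorm g"
  using sqnorm_T_le[of g] cheeger_ineq[OF assms] by (simp add: algebra_simps)

end

end

section \<open>The continuous-time semigroup\<close>

lemma mat_vec_R: "i < n \<Longrightarrow> mat_vec n R (\<lambda>j. v j * h j) i = v i * P h i"
  using v_nonzero by (simp add: mat_vec_def P_def mult.assoc)

lemma mat_vec_lazy_mat: "i < n \<Longrightarrow> mat_vec n lazy_mat (\<lambda>j. v j * h j) i = v i * T h i"
proof -
  assume i: "i < n"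
  have "(\<Sum>j<n. id_mat i j * (v j * h j)) = v i * h i"
    using i by (simp add: id_mat_def if_distrib[of "\<lambda>a. a * _"] cong: if_cong)
  then have "mat_vec n lazy_mat (\<lambda>j. v j * h j) i = (v i * h i + mat_vec n R (\<lambda>j. v j * h j) i) / 2"
    by (simp add: mat_vec_def lazy_mat_def sum.distrib sum_divide_distrib[symmetric] algebra_simps)
  with mat_vec_R[OF i] show ?thesis
    by (simp add: T_def algebra_simps)
qed

lemma mat_exp_apply_eq_poisson_P:
  "i < n \<Longrightarrow> (\<Sum>j<n. mat_exp n (\<lambda>a b. t * (R a b - id_mat a b)) i j * (v j * h j)) =
    v i * poisson P t h i"
  using mat_exp_minus_id_apply_intertwined(1)[OF mat_vec_R P_cong _ v_nonzero] .

lemma summable_poisson_P: "i < n \<Longrightarrow> summable (\<lambda>m. \<bar>s^m / fact m * (P^^m) h i\<bar>)"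
  using mat_exp_minus_id_apply_intertwined(2)[OF mat_vec_R P_cong _ v_nonzero] .

lemma mat_exp_apply_eq_poisson_T:
  assumes "i < n"
  shows "(\<Sum>j<n. mat_exp n (\<lambda>a b. t * (R a b - id_mat a b)) i j * (v j * h j)) =
    v i * poisson T (2 * t) h i"
proof -
  have "(\<lambda>a b. t * (R a b - id_mat a b)) = (\<lambda>a b. (2 * t) * (lazy_mat a b - id_mat a b))"
    by (intro ext) (simp add: lazy_mat_def field_simps)
  then show ?thesis
    using mat_exp_minus_id_apply_intertwined(1)[OF mat_vec_lazy_mat T_cong _ v_nonzero] assms
    by simp
qed

lemma summable_poisson_T: "i < n \<Longrightarrow> summable (\<lambda>m. \<bar>s^m / fact m * (T^^m) h i\<bar>)"
  using mat_exp_minus_id_apply_intertwined(2)[OF mat_vec_lazy_mat T_cong _ v_nonzero] .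

lemma mixing_error_eq:
  "mixing_error n R u v t x =
    (\<Sum>i<n. \<pi> i * \<bar>poisson P t (\<lambda>j. x j / v j) i - mean (\<lambda>j. x j / v j)\<bar>)"
proof -
  let ?h = "\<lambda>j. x j / v j"
  have "(\<Sum>j<n. (mat_exp n (\<lambda>a b. t * (R a b - id_mat a b)) i j - v i * u j) * x j) =
      v i * (poisson P t ?h i - mean ?h)" if "i < n" for i
  proof -
    have "(\<Sum>j<n. mat_exp n (\<lambda>a b. t * (R a b - id_mat a b)) i j * x j) = v i * poisson P t ?h i"
      using mat_exp_apply_eq_poisson_P[OF that, of t ?h] by (simp add: v_nonzero)
    moreover have "mean ?h = (\<Sum>j<n. u j * x j)"
      by (simp add: mean_def v_nonzero)
    ultimately show ?thesis
      by (simp add: left_diff_distrib right_diff_distrib sum_subtractf sum_distrib_left mult.assoc)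
  qed
  then show ?thesis
    by (simp add: mixing_error_def abs_mult mult.assoc abs_u_eq abs_v_eq)
qed

lemma mean_poisson_P: "mean (poisson P t h) = mean h"
proof -
  have "mean ((P^^m) h) = mean h" for m
    by (induction m) (simp_all add: mean_P)
  then have "mean (poisson P t h) = exp (- t) * (\<Sum>m. t^m / fact m * mean h)"
    using sum_poisson(1)[of "{..<n}" t P h \<pi>] summable_poisson_P
    by (simp only: mean_def finite_lessThan lessThan_iff)
  also have "(\<Sum>m. t^m / fact m * mean h) = exp t * mean h"
    using sums_mult2[OF exp_real_sums, of t "mean h"] by (rule sums_unique[symmetric])
  finally show ?thesis
    by (simp add: mult_exp_exp)
qed

lemma mixing_error_single_state:
  assumes "n = 1"
  shows "mixing_error n R u v t x = 0"
proof -
  have n1: "{..<n} = {0}"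
    using assms by auto
  then have "\<pi> 0 = 1"
    using normalized by simp
  then have "poisson P t (\<lambda>j. x j / v j) 0 = mean (\<lambda>j. x j / v j)"
    using mean_poisson_P[of t "\<lambda>j. x j / v j"] by (simp add: mean_def n1)
  then show ?thesis
    by (simp add: mixing_error_eq n1)
qed

lemma T_pow_add_const: "i < n \<Longrightarrow> (T^^m) (\<lambda>j. g j + c) i = (T^^m) g i + c"
proof (induction m arbitrary: i)
  case (Suc m)
  have "(T^^Suc m) (\<lambda>j. g j + c) i = T (\<lambda>j. (T^^m) g j + c) i"
    using Suc by (auto intro: T_cong)
  also have "\<dots> = (T^^Suc m) g i + c"
    using T_add_const[OF Suc.prems] by simp
  finally show ?case .
qed simp

lemma poisson_T_add_const:
  assumes "i < n"
  shows "poisson T s (\<lambda>j. g j + c) i = poisson T s g i + c"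
proof -
  have "(\<lambda>m. s^m / fact m * (T^^m) g i + c * (s^m / fact m)) sums
      ((\<Sum>m. s^m / fact m * (T^^m) g i) + c * exp s)"
    using summable_rabs_cancel[OF summable_poisson_T[OF assms]]
    by (intro sums_add summable_sums sums_mult exp_real_sums)
  then show ?thesis
    using T_pow_add_const[OF assms]
    by (simp add: poisson_def sums_iff algebra_simps mult_exp_exp)
qed

lemma poisson_P_eq_poisson_T:
  assumes "i < n"
  shows "poisson P t h i = poisson T (2 * t) h i"
  using mat_exp_apply_eq_poisson_P[OF assms, of t h] mat_exp_apply_eq_poisson_T[OF assms, of t h]
    v_nonzero[OF assms]
  by simp

section \<open>Upper bound on the mixing time\<close>

lemma l1_le_sqrt_sqnorm: "(\<Sum>i<n. \<pi> i * \<bar>f i\<bar>) \<le> sqrt (sqnorm f)"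
proof -
  have "(\<Sum>i<n. sqrt (\<pi> i) * (sqrt (\<pi> i) * \<bar>f i\<bar>))^2 \<le>
      (\<Sum>i<n. (sqrt (\<pi> i))^2) * (\<Sum>i<n. (sqrt (\<pi> i) * \<bar>f i\<bar>)^2)"
    by (rule Cauchy_Schwarz_ineq_sum)
  then have "(\<Sum>i<n. \<pi> i * \<bar>f i\<bar>)^2 \<le> sqnorm f"
    using pi_pos normalized
    by (simp add: sqnorm_def power_mult_distrib mult.assoc[symmetric] less_imp_le)
  then show ?thesis
    by (simp add: real_le_rsqrt)
qed

context
  fixes \<rho> :: real
  assumes contraction: "\<And>f. mean f = 0 \<Longrightarrow> sqnorm (T f) \<le> \<rho> * sqnorm f"
    and contraction_nonneg: "0 \<le> \<rho>"
begin

lemma sqnorm_T_pow_le: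
  assumes "mean g = 0"
  shows "sqnorm ((T^^m) g) \<le> \<rho>^m * sqnorm g"
proof (induction m)
  case (Suc m)
  have "mean ((T^^m) g) = 0"
    using assms by (induction m) (simp_all add: mean_T)
  then have "sqnorm ((T^^Suc m) g) \<le> \<rho> * sqnorm ((T^^m) g)"
    using contraction by simp
  also have "\<dots> \<le> \<rho> * (\<rho>^m * sqnorm g)"
    using Suc contraction_nonneg by (intro mult_left_mono)
  finally show ?case by simp
qed simp

lemma mixing_error_le_contraction:
  assumes "0 \<le> t"
  shows "mixing_error n R u v t x \<le>
    exp (- (2 * t * (1 - sqrt \<rho>))) * sqrt (variance (\<lambda>j. x j / v j))"
proof -
  let ?h = "\<lambda>j. x j / v j"
  define g where "g = (\<lambda>j. ?h j - mean ?h)"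
  have "mixing_error n R u v t x = (\<Sum>i<n. \<pi> i * \<bar>poisson T (2 * t) g i\<bar>)"
  proof -
    have "poisson P t ?h i - mean ?h = poisson T (2 * t) g i" if "i < n" for i
      using poisson_P_eq_poisson_T[OF that] poisson_T_add_const[OF that, of "2 * t" g "mean ?h"]
      by (simp add: g_def)
    then show ?thesis
      by (simp add: mixing_error_eq)
  qed
  also have "\<dots> \<le> exp (- (2 * t * (1 - sqrt \<rho>))) * sqrt (sqnorm g)"
  proof (rule sum_abs_poisson_le)
    fix m
    have "mean g = 0"
      by (simp add: g_def mean_shift)
    then have "sqrt (sqnorm ((T^^m) g)) \<le> sqrt (\<rho>^m * sqnorm g)"
      by (intro real_sqrt_le_mono sqnorm_T_pow_le)
    then show "(\<Sum>i<n. \<pi> i * \<bar>(T^^m) g i\<bar>) \<le> sqrt (sqnorm g) * sqrt \<rho> ^ m"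
      using l1_le_sqrt_sqnorm[of "(T^^m) g"] contraction_nonneg
      by (simp add: real_sqrt_mult real_sqrt_power mult.commute)
  qed (use assms pi_nonneg contraction_nonneg summable_poisson_T[of _ "2 * t" g] in auto)
  finally show ?thesis
    by (simp add: variance_def g_def)
qed

end

lemma variance_le_of_l1_norm:
  assumes l1: "(\<Sum>i<n. \<bar>u i * x i\<bar>) = 1" and "0 < \<kappa>" and \<kappa>: "\<And>i. i < n \<Longrightarrow> \<kappa> \<le> \<pi> i"
  shows "variance (\<lambda>j. x j / v j) \<le> 1 / \<kappa>"
proof -
  have "\<pi> i * (x i / v i)^2 \<le> \<bar>u i * x i\<bar> / \<kappa>" if i: "i < n" for i
  proof -
    define y where "y = x i / v i"
    have eq: "\<bar>u i * x i\<bar> = \<pi> i * \<bar>y\<bar>"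
      using i by (simp add: y_def abs_mult abs_u_eq abs_v_eq v_nonzero)
    have "\<bar>u i * x i\<bar> \<le> 1"
      using l1 member_le_sum[of i "{..<n}" "\<lambda>i. \<bar>u i * x i\<bar>"] i by simp
    then have "\<kappa> * \<bar>y\<bar> \<le> 1"
      using eq \<kappa>[OF i] mult_right_mono[of \<kappa> "\<pi> i" "\<bar>y\<bar>"] by simp
    then have "\<bar>y\<bar> \<le> 1 / \<kappa>"
      using \<open>0 < \<kappa>\<close> by (simp add: field_simps)
    then have "\<pi> i * \<bar>y\<bar> * \<bar>y\<bar> \<le> \<pi> i * \<bar>y\<bar> * (1 / \<kappa>)"
      using pi_pos[OF i] by (intro mult_left_mono) simp_all
    then show ?thesis
      by (simp add: eq flip: y_def) (simp add: power2_eq_square mult.assoc)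
  qed
  then have "sqnorm (\<lambda>j. x j / v j) \<le> (\<Sum>i<n. \<bar>u i * x i\<bar> / \<kappa>)"
    unfolding sqnorm_def by (intro sum_mono) simp
  also have "\<dots> = 1 / \<kappa>"
    using l1 by (simp add: sum_divide_distrib[symmetric])
  finally show ?thesis
    using variance_le_sqnorm by (rule order.trans[rotated])
qed

lemma mixing_error_le_expansion:
  assumes expansion_ge: "\<And>S. admissible S \<Longrightarrow> \<phi> \<le> edge_expansion_set n R u v S"
    and "0 \<le> \<phi>" "\<phi> \<le> 1" "0 \<le> t"
    and l1: "(\<Sum>i<n. \<bar>u i * x i\<bar>) = 1" and "0 < \<kappa>" "\<And>i. i < n \<Longrightarrow> \<kappa> \<le> \<pi> i"
  shows "mixing_error n R u v t x \<le> exp (- (t * \<phi>^2 / 16)) / sqrt \<kappa>"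
proof -
  let ?\<rho> = "1 - \<phi>^2 / 16"
  have "\<phi>^2 \<le> 1"
    using assms by (simp add: power_le_one)
  then have "mixing_error n R u v t x \<le>
      exp (- (2 * t * (1 - sqrt ?\<rho>))) * sqrt (variance (\<lambda>j. x j / v j))"
    using sqnorm_T_contraction[OF expansion_ge \<open>0 \<le> \<phi>\<close>] \<open>0 \<le> t\<close>
    by (intro mixing_error_le_contraction) simp_all
  also have "\<dots> \<le> exp (- (t * \<phi>^2 / 16)) * sqrt (1 / \<kappa>)"
  proof (intro mult_mono)
    have "t * \<phi>^2 / 16 = 2 * t * (\<phi>^2 / 16 / 2)"
      by simp
    also have "\<dots> \<le> 2 * t * (1 - sqrt ?\<rho>)"
      using \<open>\<phi>^2 \<le> 1\<close> \<open>0 \<le> t\<close>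
      by (intro mult_left_mono half_le_one_minus_sqrt_one_minus) simp_all
    finally show "exp (- (2 * t * (1 - sqrt ?\<rho>))) \<le> exp (- (t * \<phi>^2 / 16))"
      by simp
    show "sqrt (variance (\<lambda>j. x j / v j)) \<le> sqrt (1 / \<kappa>)"
      using variance_le_of_l1_norm[OF assms(5-)] by simp
  qed (simp_all add: variance_nonneg)
  finally show ?thesis
    by (simp add: real_sqrt_divide)
qed

lemma mixing_time_le_of_expansion:
  assumes expansion_ge: "\<And>S. admissible S \<Longrightarrow> \<phi> \<le> edge_expansion_set n R u v S"
    and "0 < \<phi>" "\<phi> \<le> 1" and \<kappa>: "\<kappa> = Min {u i * v i | i. i < n}" and "0 < \<epsilon>" "\<epsilon> < 1"
  shows "mixing_time_cont n R u v \<epsilon> \<le> ereal (100 * ln (real n / (\<kappa> * \<epsilon>)) / \<phi>^2)"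
proof (rule mixing_time_cont_le)
  note \<kappa>_bounds = min_pi_bounds[OF \<kappa>]
  have "1 \<le> real n / (\<kappa> * \<epsilon>)"
    using \<kappa>_bounds(1,2) assms(5,6) n_pos mult_le_one[of \<kappa> \<epsilon>] by (simp add: field_simps)
  then show "0 \<le> 100 * ln (real n / (\<kappa> * \<epsilon>)) / \<phi>^2"
    by simp
  fix x
  assume "(\<Sum>i<n. \<bar>u i * x i\<bar>) = 1"
  then have "mixing_error n R u v (100 * ln (real n / (\<kappa> * \<epsilon>)) / \<phi>^2) x \<le>
      exp (- (100 * ln (real n / (\<kappa> * \<epsilon>)) / \<phi>^2 * \<phi>^2 / 16)) / sqrt \<kappa>"
    using \<open>0 \<le> 100 * ln (real n / (\<kappa> * \<epsilon>)) / \<phi>^2\<close> \<kappa>_bounds assms(2,3)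
    by (intro mixing_error_le_expansion[OF expansion_ge]) simp_all
  also have "\<dots> \<le> \<epsilon>"
    using exp_ln_ratio_le[of \<kappa> \<epsilon> "real n"] \<kappa>_bounds(1,2) assms(2,5,6) n_pos by simp
  finally show "mixing_error n R u v (100 * ln (real n / (\<kappa> * \<epsilon>)) / \<phi>^2) x \<le> \<epsilon>" .
qed

theorem mixing_time_upper_bound:
  assumes \<kappa>: "\<kappa> = Min {u i * v i | i. i < n}" and "0 < \<epsilon>" "\<epsilon> < 1"
  shows "mixing_time_cont n R u v \<epsilon> \<le>
    (if edge_expansion n R u v = 0 then \<infinity>
     else ereal (100 * ln (real n / (\<kappa> * \<epsilon>))) / (edge_expansion n R u v)\<^sup>2)"
proof (cases "edge_expansion n R u v")
  case (real \<phi>)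
  show ?thesis
  proof (cases "\<phi> = 0")
    case False
    have expansion_ge: "\<phi> \<le> edge_expansion_set n R u v S" if "admissible S" for S
      using edge_expansion_le[OF that] real by simp
    obtain S where "admissible S"
      using real le_edge_expansion[of "\<phi> + 1"] by force
    then have "\<phi> \<le> 1"
      using expansion_ge edge_expansion_set_bounds(2) by fastforce
    moreover have "0 < \<phi>"
      using edge_expansion_nonneg real False by simp
    ultimately show ?thesis
      using mixing_time_le_of_expansion[OF expansion_ge _ _ assms] real False
      by (simp add: power2_eq_square)
  qed (simp add: real)
next
  case PInf
  then have "\<not> (\<exists>S. admissible S)"
    using edge_expansion_le by force
  then have "n = 1"
    using admissible_exists n_pos by force
  then have "mixing_time_cont n R u v \<epsilon> \<le> ereal 0"
    using \<open>0 < \<epsilon>\<close> mixing_error_single_state by (intro mixing_time_cont_le) simp_all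
  with PInf show ?thesis
    by (simp add: power2_eq_square zero_ereal_def)
qed (use edge_expansion_nonneg in simp)

section \<open>Lower bound on the mixing time\<close>

lemma cut_eq_flow_in:
  assumes "S \<subseteq> {..<n}"
  shows "cut S = (\<Sum>i\<in>{..<n} - S. \<Sum>j\<in>S. flow i j)"
proof -
  have split: "(\<Sum>i\<in>{..<n}. F i) = (\<Sum>i\<in>{..<n} - S. F i) + (\<Sum>i\<in>S. F i)" for F :: "nat \<Rightarrow> real"
    using assms by (simp add: sum.subset_diff[of S "{..<n}"])
  have "cut S + (\<Sum>i\<in>S. \<Sum>j\<in>S. flow i j) = (\<Sum>i\<in>S. \<pi> i)"
    using assms sum_flow_row
    by (simp add: cut_def split add.commute sum.distrib[symmetric] subset_eq)
  also have "\<dots> = (\<Sum>j\<in>S. \<Sum>i<n. flow i j)"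
    using assms sum_flow_col by (simp add: subset_eq)
  also have "\<dots> = (\<Sum>i\<in>{..<n} - S. \<Sum>j\<in>S. flow i j) + (\<Sum>i\<in>S. \<Sum>j\<in>S. flow i j)"
    by (subst sum.swap) (simp add: split)
  finally show ?thesis by simp
qed

lemma mass_outside_P_le:
  assumes S: "S \<subseteq> {..<n}" and f: "\<And>j. j < n \<Longrightarrow> 0 \<le> f j \<and> f j \<le> c"
  shows "(\<Sum>i\<in>{..<n} - S. \<pi> i * P f i) \<le> (\<Sum>i\<in>{..<n} - S. \<pi> i * f i) + c * cut S"
proof -
  have "(\<Sum>i\<in>{..<n} - S. \<pi> i * P f i) =
      (\<Sum>i\<in>{..<n} - S. \<Sum>j\<in>{..<n} - S. flow i j * f j) + (\<Sum>i\<in>{..<n} - S. \<Sum>j\<in>S. flow i j * f j)"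
    using S by (simp add: pi_mult_P sum.distrib[symmetric] sum.subset_diff[of S "{..<n}"])
  also have "(\<Sum>i\<in>{..<n} - S. \<Sum>j\<in>{..<n} - S. flow i j * f j) \<le> (\<Sum>j\<in>{..<n} - S. \<pi> j * f j)"
  proof -
    have "(\<Sum>i\<in>{..<n} - S. \<Sum>j\<in>{..<n} - S. flow i j * f j) =
        (\<Sum>j\<in>{..<n} - S. (\<Sum>i\<in>{..<n} - S. flow i j) * f j)"
      by (subst sum.swap) (simp add: sum_distrib_right)
    also have "\<dots> \<le> (\<Sum>j\<in>{..<n} - S. (\<Sum>i<n. flow i j) * f j)"
      using f flow_nonneg by (intro sum_mono mult_right_mono sum_mono2) auto
    finally show ?thesis
      by (simp add: sum_flow_col)
  qed
  also have "(\<Sum>i\<in>{..<n} - S. \<Sum>j\<in>S. flow i j * f j) \<le> (\<Sum>i\<in>{..<n} - S. \<Sum>j\<in>S. flow i j * c)"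
    using f S flow_nonneg by (intro sum_mono mult_left_mono) auto
  also have "\<dots> = c * cut S"
    using cut_eq_flow_in[OF S] by (simp add: sum_distrib_left mult.commute)
  finally show ?thesis by simp
qed

lemma mass_outside_P_pow_le:
  assumes S: "S \<subseteq> {..<n}" and h: "\<And>j. j < n \<Longrightarrow> 0 \<le> h j \<and> h j \<le> c"
    and outside: "\<And>j. j \<in> {..<n} - S \<Longrightarrow> h j = 0"
  shows "(\<Sum>i\<in>{..<n} - S. \<pi> i * (P^^m) h i) \<le> real m * (c * cut S)"
proof (induction m)
  case (Suc m)
  have "(\<Sum>i\<in>{..<n} - S. \<pi> i * (P^^Suc m) h i) \<le> (\<Sum>i\<in>{..<n} - S. \<pi> i * (P^^m) h i) + c * cut S"
    using mass_outside_P_le[OF S P_pow_bounds[OF h]] by simp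
  with Suc show ?case
    by (simp add: algebra_simps)
qed (simp add: outside)

lemma mass_outside_poisson_P_le:
  assumes S: "S \<subseteq> {..<n}" and h: "\<And>j. j < n \<Longrightarrow> 0 \<le> h j \<and> h j \<le> c"
    and outside: "\<And>j. j \<in> {..<n} - S \<Longrightarrow> h j = 0" and "0 \<le> t"
  shows "(\<Sum>i\<in>{..<n} - S. \<pi> i * poisson P t h i) \<le> t * (c * cut S)"
proof -
  have "(\<Sum>i\<in>{..<n} - S. \<pi> i * poisson P t h i) \<le>
      exp (- t) * (\<Sum>m. t^m / fact m * (real m * (c * cut S)))"
    using summable_poisson_P mass_outside_P_pow_le[OF assms(1-3)] \<open>0 \<le> t\<close>
      sums_summable[OF sums_mult2[OF sums_exp_times_index, of t "c * cut S"]]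
    by (intro sum_poisson_le) (auto simp: mult.assoc)
  also have "(\<Sum>m. t^m / fact m * (real m * (c * cut S))) = t * exp t * (c * cut S)"
    using sums_mult2[OF sums_exp_times_index, of t "c * cut S"] by (simp add: sums_iff mult.assoc)
  finally show ?thesis
    by (simp add: exp_minus field_simps)
qed

lemma mixing_error_indicator_ge:
  assumes S: "admissible S" and "0 \<le> t"
  defines "x \<equiv> \<lambda>j. if j \<in> S then v j / (\<Sum>i\<in>S. \<pi> i) else 0"
  shows "(\<Sum>i<n. \<bar>u i * x i\<bar>) = 1"
    and "1 - 2 * t * edge_expansion_set n R u v S \<le> mixing_error n R u v t x"
proof -
  define \<sigma> where "\<sigma> = (\<Sum>i\<in>S. \<pi> i)"
  have S_sub: "S \<subseteq> {..<n}" and \<sigma>_pos: "0 < \<sigma>" and \<sigma>_half: "\<sigma> \<le> 1/2"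
    using S sum_pi_pos by (auto simp: admissible_def \<sigma>_def)
  define h where "h = (\<lambda>j. if j \<in> S then 1 / \<sigma> else 0)"
  have split: "(\<Sum>i<n. F i) = (\<Sum>i\<in>{..<n} - S. F i) + (\<Sum>i\<in>S. F i)" for F :: "nat \<Rightarrow> real"
    using S_sub by (simp add: sum.subset_diff[of S "{..<n}"])
  have xh: "(\<lambda>j. x j / v j) = h"
    using S_sub v_nonzero by (intro ext) (auto simp: x_def h_def \<sigma>_def subset_eq)
  have ux: "u i * x i = \<pi> i * h i" if "i < n" for i
    using v_nonzero[OF that] by (simp add: x_def h_def \<sigma>_def)
  have mean_h: "mean h = 1"
    using \<sigma>_pos by (simp add: mean_def split h_def sum_divide_distrib[symmetric] \<sigma>_def)
  show "(\<Sum>i<n. \<bar>u i * x i\<bar>) = 1"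
    using mean_h pi_pos \<sigma>_pos by (simp add: ux mean_def h_def less_imp_le)
  let ?H = "poisson P t h"
  have "(\<Sum>i\<in>{..<n} - S. \<pi> i * ?H i) \<le> t * (1 / \<sigma> * cut S)"
    using \<sigma>_pos \<open>0 \<le> t\<close> by (intro mass_outside_poisson_P_le[OF S_sub]) (auto simp: h_def)
  then have out: "(\<Sum>i\<in>{..<n} - S. \<pi> i * ?H i) \<le> t * edge_expansion_set n R u v S"
    by (simp add: edge_expansion_set_eq[OF S_sub] \<sigma>_def)
  have total: "(\<Sum>i\<in>{..<n} - S. \<pi> i * ?H i) + (\<Sum>i\<in>S. \<pi> i * ?H i) = 1"
    using mean_poisson_P[of t h] mean_h by (simp add: mean_def split)
  have "mixing_error n R u v t x = (\<Sum>i<n. \<pi> i * \<bar>?H i - 1\<bar>)"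
    by (simp add: mixing_error_eq xh mean_h)
  also have "\<dots> \<ge> (\<Sum>i\<in>{..<n} - S. \<pi> i * (1 - ?H i)) + (\<Sum>i\<in>S. \<pi> i * (?H i - 1))"
    unfolding split
  proof (intro add_mono sum_mono mult_left_mono)
    fix i assume "i \<in> S"
    then show "0 \<le> \<pi> i"
      using S_sub by (auto intro: pi_nonneg)
  qed (auto simp: pi_nonneg)
  finally show "1 - 2 * t * edge_expansion_set n R u v S \<le> mixing_error n R u v t x"
    using out total split[of \<pi>] normalized \<sigma>_half
    by (simp add: right_diff_distrib sum_subtractf \<sigma>_def)
qed

lemma expansion_ratio_le_of_gap:
  assumes "0 \<le> \<epsilon>" "\<epsilon> < 1" "0 \<le> t"
    and gap: "\<And>S. admissible S \<Longrightarrow> 1 - \<epsilon> \<le> 2 * t * edge_expansion_set n R u v S"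
  shows "(if edge_expansion n R u v = 0 then \<infinity> else ereal (1/2 - \<epsilon>) / edge_expansion n R u v)
    \<le> ereal t"
proof (cases "\<exists>S. admissible S")
  case False
  then have "edge_expansion n R u v = \<infinity>"
    using le_edge_expansion by (metis ereal_top)
  with \<open>0 \<le> t\<close> show ?thesis by simp
next
  case True
  then obtain S where "admissible S" ..
  then have "0 < t"
    using gap[of S] assms(2,3) by (cases "t = 0") simp_all
  then have "ereal ((1 - \<epsilon>) / (2 * t)) \<le> edge_expansion n R u v"
    using gap by (intro le_edge_expansion) (simp add: field_simps)
  moreover obtain \<phi> where \<phi>: "edge_expansion n R u v = ereal \<phi>"
    using edge_expansion_le[OF \<open>admissible S\<close>] edge_expansion_nonneg
    by (cases "edge_expansion n R u v") auto
  ultimately have "(1 - \<epsilon>) / (2 * t) \<le> \<phi>"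
    by simp
  moreover have "0 < (1 - \<epsilon>) / (2 * t)"
    using \<open>0 < t\<close> \<open>\<epsilon> < 1\<close> by simp
  ultimately have "0 < \<phi>" and "1 - \<epsilon> \<le> 2 * t * \<phi>"
    using \<open>0 < t\<close> by (linarith, simp add: field_simps)
  with \<phi> \<open>0 < t\<close> \<open>0 \<le> \<epsilon>\<close> show ?thesis
    by (simp add: field_simps)
qed

theorem mixing_time_lower_bound:
  assumes "0 \<le> \<epsilon>" "\<epsilon> < 1"
  shows "(if edge_expansion n R u v = 0 then \<infinity> else ereal (1/2 - \<epsilon>) / edge_expansion n R u v)
    \<le> mixing_time_cont n R u v \<epsilon>"
proof (rule le_mixing_time_cont)
  fix t :: real
  assume "0 \<le> t" and mixed: "\<And>x. (\<Sum>i<n. \<bar>u i * x i\<bar>) = 1 \<Longrightarrow> mixing_error n R u v t x \<le> \<epsilon>"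
  have "1 - \<epsilon> \<le> 2 * t * edge_expansion_set n R u v S" if "admissible S" for S
    using mixing_error_indicator_ge[OF that \<open>0 \<le> t\<close>] mixed by fastforce
  with assms \<open>0 \<le> t\<close> show "(if edge_expansion n R u v = 0 then \<infinity>
      else ereal (1/2 - \<epsilon>) / edge_expansion n R u v) \<le> ereal t"
    by (rule expansion_ratio_le_of_gap)
qed

end

theorem lemma3p10:
  fixes n :: nat and R :: "nat \<Rightarrow> nat \<Rightarrow> real" and u v :: "nat \<Rightarrow> real"
    and \<kappa> \<epsilon> :: real
  assumes nonneg: "\<forall>i<n. \<forall>j<n. R i j \<ge> 0"
    and u_pos: "\<forall>i<n. u i > 0" and v_pos: "\<forall>i<n. v i > 0"
    and left_eig: "\<forall>j<n. (\<Sum>i<n. u i * R i j) = u j"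
    and right_eig: "\<forall>i<n. (\<Sum>j<n. R i j * v j) = v i"
    and normalized: "(\<Sum>i<n. u i * v i) = 1"
    and kappa_def: "\<kappa> = Min {u i * v i | i. i < n}"
    and eps: "0 < \<epsilon>" "\<epsilon> < 1"
  shows "(if edge_expansion n R u v = 0 then \<infinity>
          else ereal (1/2 - \<epsilon>) / edge_expansion n R u v) \<le> mixing_time_cont n R u v \<epsilon>
       \<and> mixing_time_cont n R u v \<epsilon> \<le>
         (if edge_expansion n R u v = 0 then \<infinity>
          else ereal (100 * ln (real n / (\<kappa> * \<epsilon>))) / (edge_expansion n R u v)\<^sup>2)"
proof -
  interpret pf_chain n R u v
    using nonneg u_pos v_pos left_eig right_eig normalized by unfold_locales
  show ?thesis
    using mixing_time_lower_bound[of \<epsilon>] mixing_time_upper_bound[OF kappa_def eps] eps by simp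
qed

end
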